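(* Let $p$ be a prime, $d_A=p$, and let $P_{XZ}$ and $\tilde P_{XZ}$ be probability distributions on $\mathbb{F}_p^2$. Let $|\Psi\rangle_{ABE}:=\sum_{(x,z)\in\mathbb{F}_p^2}\sqrt{P_{XZ}(x,z)}\,(\mathbf{W}(x,z)_A\otimes I_B)|\Phi\rangle_{AB}\otimes|x,z\rangle_E$ and $\omega_{ABE}:=(\Lambda[\tilde P'_{XZ}]_B)(|\Psi\rangle\langle\Psi|)$, where $\tilde P'_{XZ}(x,z):=\tilde P_{XZ}(-x,z)$ and $\Lambda[\tilde P'_{XZ}]_B$ is the generalized Pauli channel with distribution $\tilde P'_{XZ}$ acting on $\mathcal{H}_B$ only. Then \begin{align*} H(A|B)_\omega&=H(\tilde P_{XZ}*P_{XZ})-\log d_A,\\ H(A|E)_\omega&=\log d_A-H(P_{XZ}), \end{align*} and for every $t\in(0,1)$, \begin{align*} \tilde H^{\downarrow}_{1-t}(A|B)_\omega&=H_{1-t}(\tilde P_{XZ}*P_{XZ})-\log d_A,\\ \tilde H^{\uparrow}_{1+t}(A|E)_\omega&\ge \log d_A-H_{\frac{1}{1+t}}(P_{XZ}). \end{align*}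
   Context: All logarithms are base 2. $\mathcal{H}_A,\mathcal{H}_B$ are $p$-dimensional with orthonormal basis $\{|j\rangle\}_{j\in\mathbb{F}_p}$; $\mathcal{H}_E$ is $p^2$-dimensional with orthonormal basis $\{|x,z\rangle\}_{(x,z)\in\mathbb{F}_p^2}$. $\omega_p=e^{2\pi i/p}$, $\mathbf{X}=\sum_{j\in\mathbb{F}_p}|j+1\rangle\langle j|$, $\mathbf{Z}=\sum_{j}\omega_p^{j}|j\rangle\langle j|$, $\mathbf{W}(x,z)=\mathbf{X}^x\mathbf{Z}^z$. $|\Phi\rangle_{AB}=\frac{1}{\sqrt p}\sum_j|j\rangle_A|j\rangle_B$. For a distribution $Q$ on $\mathbb{F}_p^2$, the generalized Pauli channel is $\Lambda[Q](\rho)=\sum_{(x,z)}Q(x,z)\mathbf{W}(x,z)\rho\mathbf{W}(x,z)^\dagger$. The convolution is $(\tilde P_{XZ}*P_{XZ})(x,z)=\sum_{x',z'}\tilde P_{XZ}(x',z')P_{XZ}(x-x',z-z')$. $H(Q)$ is the Shannon entropy and, for $s\in(-1,\infty)\setminus\{0\}$, $H_{1+s}(Q):=-\frac1s\log\sum_{v}Q(v)^{1+s}$ (Rényi entropy of order $1+s$). For states: $H(A|B)_\omega=H(\omega_{AB})-H(\omega_B)$ with von Neumann entropy $H$. The sandwiched Rényi divergence is $\tilde D_{1+s}(\rho\|\sigma)=\frac1s\log\mathrm{Tr}\big(\sigma^{-\frac{s}{2(1+s)}}\rho\,\sigma^{-\frac{s}{2(1+s)}}\big)^{1+s}$; $\tilde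 H^{\downarrow}_{1+s}(A|B)_\omega:=-\tilde D_{1+s}(\omega_{AB}\|I_A\otimes\omega_B)$ and $\tilde H^{\uparrow}_{1+s}(A|E)_\omega:=-\inf_{\sigma_E}\tilde D_{1+s}(\omega_{AE}\|I_A\otimes\sigma_E)$, the infimum over density operators on $\mathcal{H}_E$. *)

theory Defs
  imports "HOL-Analysis.Analysis" "Jordan_Normal_Form.Matrix"
begin

text \<open>Operators are JNF complex matrices; kets are column matrices.
  Composite systems use the standard Kronecker ordering: the basis vector
  |i>|j> of C^m (x) C^n has index i*n+j.\<close>

definition mtrace :: "complex mat \<Rightarrow> complex" where
  "mtrace M = (\<Sum>i<dim_row M. M $$ (i, i))"

definition adj :: "complex mat \<Rightarrow> complex mat" where
  "adj M = mat (dim_col M) (dim_row M) (\<lambda>(i, j). cnj (M $$ (j, i)))"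

definition kron :: "complex mat \<Rightarrow> complex mat \<Rightarrow> complex mat" where
  "kron A B = mat (dim_row A * dim_row B) (dim_col A * dim_col B)
     (\<lambda>(i, j). A $$ (i div dim_row B, j div dim_col B) * B $$ (i mod dim_row B, j mod dim_col B))"

definition msum :: "nat \<Rightarrow> nat \<Rightarrow> ('i \<Rightarrow> complex mat) \<Rightarrow> 'i set \<Rightarrow> complex mat" where
  "msum n m f S = mat n m (\<lambda>ij. \<Sum>k\<in>S. f k $$ ij)"

definition ket :: "nat \<Rightarrow> nat \<Rightarrow> complex mat" where
  "ket n k = mat n 1 (\<lambda>(i, _). if i = k then 1 else 0)"

definition ptrace_first :: "nat \<Rightarrow> nat \<Rightarrow> complex mat \<Rightarrow> complex mat" where
  "ptrace_first d1 d2 M = mat d2 d2 (\<lambda>(i, j). \<Sum>k<d1. M $$ (k * d2 + i, k * d2 + j))"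

definition ptrace_second :: "nat \<Rightarrow> nat \<Rightarrow> complex mat \<Rightarrow> complex mat" where
  "ptrace_second d1 d2 M = mat d1 d1 (\<lambda>(i, j). \<Sum>k<d2. M $$ (i * d2 + k, j * d2 + k))"

definition ptrace_mid :: "nat \<Rightarrow> nat \<Rightarrow> nat \<Rightarrow> complex mat \<Rightarrow> complex mat" where
  "ptrace_mid d1 d2 d3 M = mat (d1 * d3) (d1 * d3) (\<lambda>(i, j).
     \<Sum>k<d2. M $$ ((i div d3) * (d2 * d3) + k * d3 + i mod d3,
                   (j div d3) * (d2 * d3) + k * d3 + j mod d3))"

definition unitary_mat :: "nat \<Rightarrow> complex mat \<Rightarrow> bool" where
  "unitary_mat n U \<longleftrightarrow> U \<in> carrier_mat n n \<and> U * adj U = 1\<^sub>m n \<and> adj U * U = 1\<^sub>m n"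

definition rdiag :: "nat \<Rightarrow> (nat \<Rightarrow> real) \<Rightarrow> complex mat" where
  "rdiag n l = mat n n (\<lambda>(i, j). if i = j then complex_of_real (l i) else 0)"

definition spec_decomp :: "complex mat \<Rightarrow> complex mat \<Rightarrow> (nat \<Rightarrow> real) \<Rightarrow> bool" where
  "spec_decomp M U l \<longleftrightarrow> dim_row M = dim_col M \<and> unitary_mat (dim_row M) U
      \<and> M = U * rdiag (dim_row M) l * adj U"

text \<open>Functional calculus for Hermitian matrices: f(M) = U diag(f(l)) U^dagger
  (independent of the chosen spectral decomposition).\<close>
definition mat_fun :: "(real \<Rightarrow> real) \<Rightarrow> complex mat \<Rightarrow> complex mat" where
  "mat_fun f M = (let (U, l) = (SOME (U, l). spec_decomp M U l)
                  in U * rdiag (dim_row M) (\<lambda>i. f (l i)) * adj U)"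

definition hermitian :: "complex mat \<Rightarrow> bool" where
  "hermitian M \<longleftrightarrow> M \<in> carrier_mat (dim_row M) (dim_row M) \<and> adj M = M"

definition psd :: "complex mat \<Rightarrow> bool" where
  "psd M \<longleftrightarrow> hermitian M \<and>
     (\<forall>v \<in> carrier_vec (dim_row M). 0 \<le> Re (\<Sum>i<dim_row M. cnj (v $ i) * (M *\<^sub>v v) $ i))"

definition density_op :: "nat \<Rightarrow> complex mat \<Rightarrow> bool" where
  "density_op n \<sigma> \<longleftrightarrow> \<sigma> \<in> carrier_mat n n \<and> psd \<sigma> \<and> mtrace \<sigma> = 1"

text \<open>von Neumann entropy -Tr(rho log rho) (base 2; note log 2 0 = 0 in Isabelle,
  which realises the convention 0 log 0 = 0).\<close>
definition vN_entropy :: "complex mat \<Rightarrow> real" where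
  "vN_entropy \<rho> = Re (mtrace (mat_fun (\<lambda>x. - (x * log 2 x)) \<rho>))"

definition supp_le :: "complex mat \<Rightarrow> complex mat \<Rightarrow> bool" where
  "supp_le \<rho> \<sigma> \<longleftrightarrow> (\<forall>v \<in> carrier_vec (dim_row \<sigma>).
      \<sigma> *\<^sub>v v = 0\<^sub>v (dim_row \<sigma>) \<longrightarrow> \<rho> *\<^sub>v v = 0\<^sub>v (dim_row \<rho>))"

text \<open>Sandwiched Renyi divergence of order 1+s, s \<in> (-1,\<infinity>)\<setminus>{0}.
  Negative powers of sigma are taken on its support (0 powr a = 0).\<close>
definition sand_div :: "real \<Rightarrow> complex mat \<Rightarrow> complex mat \<Rightarrow> ereal" where
  "sand_div s \<rho> \<sigma> =
    (let a = s / (2 * (1 + s));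
         S = mat_fun (\<lambda>x. x powr (- a)) \<sigma>;
         Q = Re (mtrace (mat_fun (\<lambda>x. x powr (1 + s)) (S * \<rho> * S)))
     in if (0 < s \<and> \<not> supp_le \<rho> \<sigma>) \<or> Q = 0 then \<infinity> else ereal ((1 / s) * log 2 Q))"

section \<open>Distributions on F_p^2 (represented as functions on {0..<p}^2)\<close>

definition prob_dist :: "nat \<Rightarrow> (nat \<Rightarrow> nat \<Rightarrow> real) \<Rightarrow> bool" where
  "prob_dist p Q \<longleftrightarrow> (\<forall>x<p. \<forall>z<p. 0 \<le> Q x z) \<and> (\<Sum>x<p. \<Sum>z<p. Q x z) = 1"

definition shannon :: "nat \<Rightarrow> (nat \<Rightarrow> nat \<Rightarrow> real) \<Rightarrow> real" where
  "shannon p Q = - (\<Sum>x<p. \<Sum>z<p. Q x z * log 2 (Q x z))"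

definition renyi :: "nat \<Rightarrow> real \<Rightarrow> (nat \<Rightarrow> nat \<Rightarrow> real) \<Rightarrow> real" where
  "renyi p \<alpha> Q = - (1 / (\<alpha> - 1)) * log 2 (\<Sum>x<p. \<Sum>z<p. Q x z powr \<alpha>)"

definition conv :: "nat \<Rightarrow> (nat \<Rightarrow> nat \<Rightarrow> real) \<Rightarrow> (nat \<Rightarrow> nat \<Rightarrow> real) \<Rightarrow> nat \<Rightarrow> nat \<Rightarrow> real" where
  "conv p Pt P x z = (\<Sum>x'<p. \<Sum>z'<p. Pt x' z' * P ((x + p - x') mod p) ((z + p - z') mod p))"

definition omega :: "nat \<Rightarrow> complex" where
  "omega p = cis (2 * pi / real p)"

definition Xop :: "nat \<Rightarrow> complex mat" where
  "Xop p = mat p p (\<lambda>(i, j). if i = (j + 1) mod p then 1 else 0)"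

definition Zop :: "nat \<Rightarrow> complex mat" where
  "Zop p = mat p p (\<lambda>(i, j). if i = j then omega p ^ j else 0)"

definition Wop :: "nat \<Rightarrow> nat \<Rightarrow> nat \<Rightarrow> complex mat" where
  "Wop p x z = Xop p ^\<^sub>m x * Zop p ^\<^sub>m z"

definition Phi :: "nat \<Rightarrow> complex mat" where
  "Phi p = mat (p * p) 1 (\<lambda>(i, _). if i div p = i mod p then complex_of_real (1 / sqrt (real p)) else 0)"

text \<open>|Psi>_ABE, with H_E = C^(p^2), basis |x,z> = index x*p+z.\<close>
definition Psi :: "nat \<Rightarrow> (nat \<Rightarrow> nat \<Rightarrow> real) \<Rightarrow> complex mat" where
  "Psi p P = msum (p * p * (p * p)) 1
     (\<lambda>(x, z). complex_of_real (sqrt (P x z)) \<cdot>\<^sub>m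
        kron (kron (Wop p x z) (1\<^sub>m p) * Phi p) (ket (p * p) (x * p + z)))
     ({..<p} \<times> {..<p})"

definition pauli_B :: "nat \<Rightarrow> (nat \<Rightarrow> nat \<Rightarrow> real) \<Rightarrow> complex mat \<Rightarrow> complex mat" where
  "pauli_B p Q \<rho> = msum (p * p * (p * p)) (p * p * (p * p))
     (\<lambda>(x, z). complex_of_real (Q x z) \<cdot>\<^sub>m
        (kron (kron (1\<^sub>m p) (Wop p x z)) (1\<^sub>m (p * p)) * \<rho> *
         adj (kron (kron (1\<^sub>m p) (Wop p x z)) (1\<^sub>m (p * p)))))
     ({..<p} \<times> {..<p})"

text \<open>The state omega_ABE of the lemma; Pt' x z = Pt (-x) z.\<close>
definition omega_ABE :: "nat \<Rightarrow> (nat \<Rightarrow> nat \<Rightarrow> real) \<Rightarrow> (nat \<Rightarrow> nat \<Rightarrow> real) \<Rightarrow> complex mat" where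
  "omega_ABE p P Pt = pauli_B p (\<lambda>x z. Pt ((p - x) mod p) z) (Psi p P * adj (Psi p P))"

definition cond_entropy :: "nat \<Rightarrow> nat \<Rightarrow> complex mat \<Rightarrow> real" where
  "cond_entropy dA dB \<rho> = vN_entropy \<rho> - vN_entropy (ptrace_first dA dB \<rho>)"

definition cond_renyi_down :: "real \<Rightarrow> nat \<Rightarrow> nat \<Rightarrow> complex mat \<Rightarrow> ereal" where
  "cond_renyi_down s dA dB \<rho> = - sand_div s \<rho> (kron (1\<^sub>m dA) (ptrace_first dA dB \<rho>))"

definition cond_renyi_up :: "real \<Rightarrow> nat \<Rightarrow> nat \<Rightarrow> complex mat \<Rightarrow> ereal" where
  "cond_renyi_up s dA dB \<rho> =
     - (INF \<sigma> \<in> {\<sigma>. density_op dB \<sigma>}. sand_div s \<rho> (kron (1\<^sub>m dA) \<sigma>))"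

end

(*
  The reduced state omega_AB is diagonal in the generalized Bell basis (W(a,b) (x) I)|Phi>,
  with eigenvalues (Pt * P)(a,b): by the transpose trick, W(x,z) on B maps (W(x0,z0) (x) I)|Phi>
  to a phase times (W(x0 - x, z0 + z) (x) I)|Phi>, and averaging over the channel convolves the
  two distributions.  Its B-marginal is maximally mixed.  The reduced state omega_AE is 1/p times
  the projector onto p orthonormal vectors, and its E-marginal is diag(P).  Every entropy in the
  statement is therefore a function of these spectra, which the functional calculus evaluates on
  spectral sums over orthonormal families.
*)

theory Submission
  imports Defs "Jordan_Normal_Form.Char_Poly" "HOL-Number_Theory.Cong"
begin

lemma mult_mat_index_sum:
  assumes "A \<in> carrier_mat n m" "B \<in> carrier_mat m k" "i < n" "j < k"
  shows "(A * B) $$ (i, j) = (\<Sum>l<m. A $$ (i, l) * B $$ (l, j))"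
  using assms by (auto simp: scalar_prod_def atLeast0LessThan intro!: sum.cong)

lemma mult_mat_vec_index_sum:
  "i < dim_row A \<Longrightarrow> v \<in> carrier_vec (dim_col A) \<Longrightarrow> (A *\<^sub>v v) $ i = (\<Sum>j<dim_col A. A $$ (i, j) * v $ j)"
  by (auto simp: scalar_prod_def atLeast0LessThan intro!: sum.cong)

lemma cnj_mult_self: "cnj z * z = complex_of_real ((cmod z)\<^sup>2)"
  using complex_norm_square[of z] by (simp add: mult.commute)

lemma adj_dims [simp]: "dim_row (adj A) = dim_col A" "dim_col (adj A) = dim_row A"
  by (auto simp: adj_def)

lemma index_adj [simp]: "i < dim_col A \<Longrightarrow> j < dim_row A \<Longrightarrow> adj A $$ (i, j) = cnj (A $$ (j, i))"
  by (auto simp: adj_def)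

lemma adj_carrier_mat [simp]: "A \<in> carrier_mat n m \<Longrightarrow> adj A \<in> carrier_mat m n"
  unfolding carrier_mat_def by simp

lemma adj_adj [simp]: "adj (adj A) = A"
  by (rule eq_matI) (simp_all add: adj_def)

lemma adj_mult_mat:
  assumes "A \<in> carrier_mat n m" "B \<in> carrier_mat m k"
  shows "adj (A * B) = adj B * adj A"
proof (rule eq_matI)
  fix i j assume "i < dim_row (adj B * adj A)" "j < dim_col (adj B * adj A)"
  then have i: "i < k" and j: "j < n" using assms by auto
  have "adj (A * B) $$ (i, j) = cnj (\<Sum>l<m. A $$ (j, l) * B $$ (l, i))"
    using assms i j by (simp add: mult_mat_index_sum[OF assms j i])
  also have "\<dots> = (\<Sum>l<m. adj B $$ (i, l) * adj A $$ (l, j))"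
    using assms i j by (auto simp: sum_conjugate intro!: sum.cong)
  also have "\<dots> = (adj B * adj A) $$ (i, j)"
    using assms i j by (subst mult_mat_index_sum[of _ k m _ n]) auto
  finally show "adj (A * B) $$ (i, j) = (adj B * adj A) $$ (i, j)" .
qed (use assms in auto)

lemma index_mult_adj:
  assumes "X \<in> carrier_mat n m" "Y \<in> carrier_mat k m" "i < n" "j < k"
  shows "(X * adj Y) $$ (i, j) = (\<Sum>l<m. X $$ (i, l) * cnj (Y $$ (j, l)))"
  using assms by (subst mult_mat_index_sum[of X n m "adj Y" k]) (auto intro!: sum.cong)

lemma index_adj_mult:
  assumes "X \<in> carrier_mat m n" "Y \<in> carrier_mat m k" "i < n" "j < k"
  shows "(adj X * Y) $$ (i, j) = (\<Sum>l<m. cnj (X $$ (l, i)) * Y $$ (l, j))"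
  using assms by (subst mult_mat_index_sum[of "adj X" n m Y k]) (auto intro!: sum.cong)

lemma unitary_mat_mult:
  assumes "unitary_mat n U" "unitary_mat n V"
  shows "unitary_mat n (U * V)"
proof -
  have U: "U \<in> carrier_mat n n" and V: "V \<in> carrier_mat n n"
    and UU: "U * adj U = 1\<^sub>m n" "adj U * U = 1\<^sub>m n"
    and VV: "V * adj V = 1\<^sub>m n" "adj V * V = 1\<^sub>m n"
    using assms by (auto simp: unitary_mat_def)
  have aU: "adj U \<in> carrier_mat n n" and aV: "adj V \<in> carrier_mat n n" using U V by auto
  have "U * V * adj (U * V) = U * (V * adj V) * adj U"
    using U V aU aV by (simp add: adj_mult_mat assoc_mult_mat[of _ n n _ n _ n] mult_carrier_mat[of _ n n])
  moreover have "adj (U * V) * (U * V) = adj V * (adj U * U) * V"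
    using U V aU aV by (simp add: adj_mult_mat assoc_mult_mat[of _ n n _ n _ n] mult_carrier_mat[of _ n n])
  ultimately show ?thesis
    using U V aU UU VV by (simp add: unitary_mat_def)
qed

lemma conj_conj_mat:
  assumes H: "H \<in> carrier_mat n n" and F: "F \<in> carrier_mat n n" and D: "D \<in> carrier_mat n n"
  shows "H * (F * D * adj F) * adj H = (H * F) * D * adj (H * F)"
  using assms by (simp add: adj_mult_mat assoc_mult_mat[of _ n n _ n _ n] mult_carrier_mat[of _ n n])

lemma unitary_conj_cancel:
  assumes H: "unitary_mat n H" and A: "A \<in> carrier_mat n n"
  shows "H * (adj H * A * H) * adj H = A"
proof -
  have Hc: "H \<in> carrier_mat n n" and HH: "H * adj H = 1\<^sub>m n"
    using H by (auto simp: unitary_mat_def)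
  have "H * (adj H * A * H) * adj H = (H * adj H) * A * (H * adj H)"
    using Hc A by (simp add: assoc_mult_mat[of _ n n _ n _ n] mult_carrier_mat[of _ n n])
  also have "\<dots> = A" using A HH by simp
  finally show ?thesis .
qed

lemma adj_conj_hermitian:
  assumes H: "H \<in> carrier_mat n n" and A: "A \<in> carrier_mat n n" and hA: "adj A = A"
  shows "adj (adj H * A * H) = adj H * A * H"
  using assms by (simp add: adj_mult_mat[of _ n n _ n] assoc_mult_mat[of _ n n _ n _ n] mult_carrier_mat[of _ n n])

lemma rdiag_carrier_mat [simp]: "rdiag n l \<in> carrier_mat n n"
  by (simp add: rdiag_def)

lemma rdiag_dims [simp]: "dim_row (rdiag n l) = n" "dim_col (rdiag n l) = n"
  by (simp_all add: rdiag_def)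

lemma index_rdiag: "i < n \<Longrightarrow> j < n \<Longrightarrow> rdiag n l $$ (i, j) = (if i = j then complex_of_real (l i) else 0)"
  by (simp add: rdiag_def)

lemma index_mult_rdiag:
  assumes "A \<in> carrier_mat m n" "i < m" "j < n"
  shows "(A * rdiag n l) $$ (i, j) = A $$ (i, j) * complex_of_real (l j)"
  using assms by (subst mult_mat_index_sum[of A m n _ n]) (auto simp: index_rdiag mult_delta_right sum.delta)

lemma index_rdiag_mult:
  assumes "A \<in> carrier_mat n m" "i < n" "j < m"
  shows "(rdiag n l * A) $$ (i, j) = complex_of_real (l i) * A $$ (i, j)"
  using assms by (subst mult_mat_index_sum[of _ n n A m]) (auto simp: index_rdiag mult_delta_left sum.delta)

lemma index_rdiag_mult_vec:
  assumes "i < n" "v \<in> carrier_vec n"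
  shows "(rdiag n l *\<^sub>v v) $ i = complex_of_real (l i) * v $ i"
  using assms by (subst mult_mat_vec_index_sum) (auto simp: index_rdiag mult_delta_left sum.delta)

lemma index_conj_rdiag:
  assumes X: "X \<in> carrier_mat n m" and Y: "Y \<in> carrier_mat k m" and ij: "i < n" "j < k"
  shows "(X * rdiag m l * adj Y) $$ (i, j) = (\<Sum>q<m. X $$ (i, q) * complex_of_real (l q) * cnj (Y $$ (j, q)))"
  using assms by (subst index_mult_adj[of _ n m Y k]) (auto simp: index_mult_rdiag simp del: index_mult_mat(1))

lemma rdiag_mult: "rdiag n a * rdiag n b = rdiag n (\<lambda>i. a i * b i)"
  by (rule eq_matI) (auto simp: index_mult_rdiag[of _ n] index_rdiag simp del: index_mult_mat(1))

lemma rdiag_one: "rdiag n (\<lambda>_. 1) = 1\<^sub>m n"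
  by (rule eq_matI) (auto simp: index_rdiag)

lemma conj_rdiag_mult:
  assumes U: "unitary_mat n U"
  shows "(U * rdiag n a * adj U) * (U * rdiag n b * adj U) = U * rdiag n (\<lambda>i. a i * b i) * adj U"
proof -
  have Uc: "U \<in> carrier_mat n n" and UU: "adj U * U = 1\<^sub>m n" using U by (auto simp: unitary_mat_def)
  have "(U * rdiag n a * adj U) * (U * rdiag n b * adj U) = U * (rdiag n a * (adj U * U) * rdiag n b) * adj U"
    using Uc by (simp add: assoc_mult_mat[of _ n n _ n _ n] mult_carrier_mat[of _ n n])
  also have "\<dots> = U * rdiag n (\<lambda>i. a i * b i) * adj U"
    using UU by (simp add: rdiag_mult)
  finally show ?thesis .
qed

lemma conj_rdiag_power:
  assumes U: "unitary_mat n U"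
  shows "(U * rdiag n l * adj U) ^\<^sub>m d = U * rdiag n (\<lambda>i. l i ^ d) * adj U"
proof (induct d)
  case 0
  have "U \<in> carrier_mat n n" "U * adj U = 1\<^sub>m n" using U by (auto simp: unitary_mat_def)
  then show ?case by (simp add: rdiag_one)
next
  case (Suc d)
  then show ?case by (simp add: conj_rdiag_mult[OF U] mult.commute)
qed

section \<open>The spectral theorem for Hermitian matrices\<close>

lemma unitary_mat_scaled_involution:
  fixes h :: "nat \<Rightarrow> nat \<Rightarrow> complex"
  assumes c: "cnj c * c = 1"
    and herm: "\<And>i j. i < n \<Longrightarrow> j < n \<Longrightarrow> cnj (h j i) = h i j"
    and sq: "\<And>i j. i < n \<Longrightarrow> j < n \<Longrightarrow> (\<Sum>k<n. h i k * h k j) = (if i = j then 1 else 0)"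
  shows "unitary_mat n (mat n n (\<lambda>(i, j). c * h i j))"
proof -
  let ?U = "mat n n (\<lambda>(i, j). c * h i j)"
  have U: "?U \<in> carrier_mat n n" by simp
  have "?U * adj ?U = 1\<^sub>m n"
  proof (rule eq_matI)
    fix i j assume "i < dim_row (1\<^sub>m n)" "j < dim_col (1\<^sub>m n)"
    then have ij: "i < n" "j < n" by auto
    have "(?U * adj ?U) $$ (i, j) = (\<Sum>k<n. (cnj c * c) * (h i k * h k j))"
      using ij herm by (subst index_mult_adj[OF U U ij]) (auto simp: algebra_simps intro!: sum.cong)
    then show "(?U * adj ?U) $$ (i, j) = 1\<^sub>m n $$ (i, j)"
      using ij sq[OF ij] c by (simp add: sum_distrib_left[symmetric])
  qed auto
  moreover have "adj ?U * ?U = 1\<^sub>m n"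
  proof (rule eq_matI)
    fix i j assume "i < dim_row (1\<^sub>m n)" "j < dim_col (1\<^sub>m n)"
    then have ij: "i < n" "j < n" by auto
    have "(adj ?U * ?U) $$ (i, j) = (\<Sum>k<n. (cnj c * c) * (h i k * h k j))"
      using ij herm by (subst index_adj_mult[OF U U ij]) (auto simp: algebra_simps intro!: sum.cong)
    then show "(adj ?U * ?U) $$ (i, j) = 1\<^sub>m n $$ (i, j)"
      using ij sq[OF ij] c by (simp add: sum_distrib_left[symmetric])
  qed auto
  ultimately show ?thesis using U by (simp add: unitary_mat_def)
qed

lemma householder_square:
  fixes w :: "nat \<Rightarrow> complex"
  assumes a: "a * a * (\<Sum>k<n. cnj (w k) * w k) = 2 * a" and ij: "i < n" "j < n"
  shows "(\<Sum>k<n. ((if i = k then 1 else 0) - a * w i * cnj (w k)) * ((if k = j then 1 else 0) - a * w k * cnj (w j)))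
       = (if i = j then 1 else 0)"
proof -
  have "(\<Sum>k<n. ((if i = k then 1 else 0) - a * w i * cnj (w k)) * ((if k = j then 1 else 0) - a * w k * cnj (w j))) =
      (\<Sum>k<n. (if i = k then 1 else 0) * (if k = j then 1 else 0))
    - (\<Sum>k<n. (if i = k then 1 else 0) * (a * w k * cnj (w j)))
    - (\<Sum>k<n. (a * w i * cnj (w k)) * (if k = j then 1 else 0))
    + (\<Sum>k<n. (a * w i * cnj (w k)) * (a * w k * cnj (w j)))"
    by (simp add: sum_subtractf sum.distrib algebra_simps)
  also have "(\<Sum>k<n. (a * w i * cnj (w k)) * (a * w k * cnj (w j))) = (a * a * (\<Sum>k<n. cnj (w k) * w k)) * w i * cnj (w j)"
    by (simp add: sum_distrib_left sum_distrib_right algebra_simps)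
  finally show ?thesis
    using ij a by (simp add: mult_delta_left mult_delta_right sum.delta sum.delta')
qed

lemma unitary_mat_with_first_column:
  fixes v :: "nat \<Rightarrow> complex"
  assumes n: "0 < n" and nv: "(\<Sum>i<n. cnj (v i) * v i) = 1"
  shows "\<exists>U. unitary_mat n U \<and> (\<forall>i<n. U $$ (i, 0) = v i)"
proof -
  \<comment> \<open>\<open>U = - c (I - 2 w w\<^sup>\<dagger> / |w|\<^sup>2)\<close> with \<open>w = v + c e\<^sub>0\<close>, \<open>c\<close> the phase of \<open>v\<^sub>0\<close>:
    a Householder reflection, rescaled so that it maps \<open>e\<^sub>0\<close> to \<open>v\<close>.\<close>
  define r where "r = cmod (v 0)"
  define c where "c = (if v 0 = 0 then 1 else v 0 / complex_of_real r)"
  have r0: "r \<ge> 0" by (simp add: r_def)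
  have vv: "cnj (v 0) * v 0 = complex_of_real (r\<^sup>2)"
    by (simp add: r_def cnj_mult_self)
  have cc: "cnj c * c = 1"
  proof (cases "v 0 = 0")
    case False
    then have "r \<noteq> 0" by (simp add: r_def)
    then show ?thesis using False vv by (simp add: c_def field_simps power2_eq_square)
  qed (simp add: c_def)
  have cv: "cnj c * v 0 = complex_of_real r"
  proof (cases "v 0 = 0")
    case False
    then have "r \<noteq> 0" by (simp add: r_def)
    then show ?thesis using False vv by (simp add: c_def field_simps power2_eq_square)
  qed (simp add: c_def r_def)
  then have cv2: "c * cnj (v 0) = complex_of_real r"
    by (metis complex_cnj_cnj complex_cnj_complex_of_real complex_cnj_mult mult.commute)
  define w where "w i = v i + (if i = 0 then c else 0)" for i
  define N where "N = (\<Sum>i<n. cnj (w i) * w i)"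
  obtain m where m: "n = Suc m" using n by (cases n) auto
  have "N = cnj (w 0) * w 0 + (\<Sum>i<m. cnj (v (Suc i)) * v (Suc i))"
    unfolding N_def m sum.lessThan_Suc_shift by (simp add: w_def)
  moreover have "1 = cnj (v 0) * v 0 + (\<Sum>i<m. cnj (v (Suc i)) * v (Suc i))"
    using nv unfolding m sum.lessThan_Suc_shift by simp
  moreover have "cnj (w 0) * w 0 = cnj (v 0) * v 0 + cnj (v 0) * c + cnj c * v 0 + cnj c * c"
    by (simp add: w_def algebra_simps)
  ultimately have N: "N = complex_of_real (2 * r + 2)"
    using cv cv2 cc by (simp add: algebra_simps)
  have "N \<noteq> 0" unfolding N of_real_eq_0_iff using r0 by linarith
  define a where "a = 2 / N"
  have ca: "cnj a = a" using N by (simp add: a_def)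
  have aN: "a * a * N = 2 * a" using \<open>N \<noteq> 0\<close> by (simp add: a_def)
  define h where "h i j = (if i = j then 1 else 0) - a * w i * cnj (w j)" for i j
  have sq: "(\<Sum>k<n. h i k * h k j) = (if i = j then 1 else 0)" if "i < n" "j < n" for i j
    unfolding h_def using aN that unfolding N_def by (rule householder_square)
  have U: "unitary_mat n (mat n n (\<lambda>(i, j). (- c) * h i j))"
    by (rule unitary_mat_scaled_involution) (use cc ca sq in \<open>auto simp: h_def\<close>)
  have cw: "c * cnj (w 0) = complex_of_real (r + 1)"
    using cv2 cc by (simp add: w_def algebra_simps)
  have "a * (c * cnj (w 0)) = complex_of_real (2 / (2 * r + 2) * (r + 1))"
    unfolding a_def N cw by (simp only: of_real_mult of_real_divide of_real_numeral)
  also have "2 / (2 * r + 2) * (r + 1) = 1" using r0 by (simp add: field_simps)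
  finally have a1: "a * (c * cnj (w 0)) = 1" by simp
  have "(- c) * h i 0 = v i" for i
  proof -
    have "(- c) * h i 0 = - c * (if i = 0 then 1 else 0) + a * (c * cnj (w 0)) * w i"
      by (simp add: h_def algebra_simps)
    then show ?thesis by (simp only: a1) (simp add: w_def)
  qed
  then show ?thesis using U n by auto
qed

lemma unit_eigenvector_exists:
  fixes A :: "complex mat"
  assumes A: "A \<in> carrier_mat n n" and n: "0 < n"
  shows "\<exists>e u. (\<Sum>i<n. cnj (u i) * u i) = 1 \<and> (\<forall>k<n. (\<Sum>l<n. A $$ (k, l) * u l) = e * u k)"
proof -
  obtain as where cp: "char_poly A = (\<Prod>a\<leftarrow>as. [:- a, 1:])" and len: "length as = n"
    using char_poly_factorized[OF A] by blast
  then obtain e rest where "as = e # rest" using n by (cases as) auto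
  then have "poly (char_poly A) e = 0" unfolding cp by simp
  then have "eigenvalue A e" using eigenvalue_root_char_poly[OF A] by simp
  then obtain v where "eigenvector A v e" unfolding eigenvalue_def by blast
  then have v: "v \<in> carrier_vec n" "v \<noteq> 0\<^sub>v n" and Av: "A *\<^sub>v v = e \<cdot>\<^sub>v v"
    using A unfolding eigenvector_def by auto
  obtain i0 where i0: "i0 < n" "v $ i0 \<noteq> 0"
    using v by (metis eq_vecI carrier_vecD index_zero_vec)
  define ss where "ss = (\<Sum>i<n. (cmod (v $ i))\<^sup>2)"
  have ss: "ss > 0" unfolding ss_def by (rule sum_pos2[of _ i0]) (use i0 in auto)
  define nv where "nv = sqrt ss"
  have nv: "nv > 0" and nv2: "nv\<^sup>2 = ss" using ss by (auto simp: nv_def)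
  define u where "u i = v $ i / complex_of_real nv" for i
  have "(\<Sum>i<n. cnj (u i) * u i) = (\<Sum>i<n. cnj (v $ i) * v $ i) / complex_of_real (nv\<^sup>2)"
    by (simp add: u_def sum_divide_distrib power2_eq_square)
  also have "\<dots> = 1"
    using ss by (simp only: cnj_mult_self of_real_sum[symmetric] nv2 ss_def[symmetric]) simp
  finally have "(\<Sum>i<n. cnj (u i) * u i) = 1" .
  moreover have "(\<Sum>l<n. A $$ (k, l) * u l) = e * u k" if k: "k < n" for k
  proof -
    have "(\<Sum>l<n. A $$ (k, l) * v $ l) = e * v $ k"
      using Av A v k by (metis carrier_matD mult_mat_vec_index_sum index_smult_vec(1) carrier_vecD)
    then show ?thesis by (simp add: u_def sum_divide_distrib[symmetric])
  qed
  ultimately show ?thesis by blast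
qed

lemma unitary_mat_one_block:
  assumes U: "unitary_mat m U"
  defines "F \<equiv> mat (Suc m) (Suc m) (\<lambda>(i, j). if i = 0 then (if j = 0 then 1 else 0)
                   else if j = 0 then 0 else U $$ (i - 1, j - 1))"
  shows "unitary_mat (Suc m) F"
proof -
  have Uc: "U \<in> carrier_mat m m" and UU: "U * adj U = 1\<^sub>m m" "adj U * U = 1\<^sub>m m"
    using U by (auto simp: unitary_mat_def)
  have Fc: "F \<in> carrier_mat (Suc m) (Suc m)" by (simp add: F_def)
  have "F * adj F = 1\<^sub>m (Suc m)"
  proof (rule eq_matI)
    fix i j assume "i < dim_row (1\<^sub>m (Suc m))" "j < dim_col (1\<^sub>m (Suc m))"
    then have ij: "i < Suc m" "j < Suc m" by auto
    have e: "(F * adj F) $$ (i, j) = F $$ (i, 0) * cnj (F $$ (j, 0)) + (\<Sum>k<m. F $$ (i, Suc k) * cnj (F $$ (j, Suc k)))"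
      by (subst index_mult_adj[OF Fc Fc ij], subst sum.lessThan_Suc_shift, rule refl)
    show "(F * adj F) $$ (i, j) = 1\<^sub>m (Suc m) $$ (i, j)"
    proof (cases "i = 0 \<or> j = 0")
      case True then show ?thesis using ij unfolding e by (auto simp: F_def)
    next
      case False
      then obtain i' j' where ii: "i = Suc i'" "j = Suc j'" by (cases i; cases j) auto
      have "(\<Sum>k<m. F $$ (i, Suc k) * cnj (F $$ (j, Suc k))) = (U * adj U) $$ (i', j')"
        using ij ii by (subst index_mult_adj[OF Uc Uc]) (auto simp: F_def)
      then show ?thesis using ij ii UU unfolding e by (auto simp: F_def)
    qed
  qed (auto simp: F_def)
  moreover have "adj F * F = 1\<^sub>m (Suc m)"
  proof (rule eq_matI)
    fix i j assume "i < dim_row (1\<^sub>m (Suc m))" "j < dim_col (1\<^sub>m (Suc m))"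
    then have ij: "i < Suc m" "j < Suc m" by auto
    have e: "(adj F * F) $$ (i, j) = cnj (F $$ (0, i)) * F $$ (0, j) + (\<Sum>k<m. cnj (F $$ (Suc k, i)) * F $$ (Suc k, j))"
      by (subst index_adj_mult[OF Fc Fc ij], subst sum.lessThan_Suc_shift, rule refl)
    show "(adj F * F) $$ (i, j) = 1\<^sub>m (Suc m) $$ (i, j)"
    proof (cases "i = 0 \<or> j = 0")
      case True then show ?thesis using ij unfolding e by (auto simp: F_def)
    next
      case False
      then obtain i' j' where ii: "i = Suc i'" "j = Suc j'" by (cases i; cases j) auto
      have "(\<Sum>k<m. cnj (F $$ (Suc k, i)) * F $$ (Suc k, j)) = (adj U * U) $$ (i', j')"
        using ij ii by (subst index_adj_mult[OF Uc Uc]) (auto simp: F_def)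
      then show ?thesis using ij ii UU unfolding e by (auto simp: F_def)
    qed
  qed (auto simp: F_def)
  ultimately show ?thesis using Fc by (simp add: unitary_mat_def)
qed

lemma conj_eigenvector_first_column:
  assumes A: "A \<in> carrier_mat n n" and H: "unitary_mat n H" and i: "i < n" and n: "0 < n"
    and eig: "\<And>k. k < n \<Longrightarrow> (\<Sum>l<n. A $$ (k, l) * H $$ (l, 0)) = e * H $$ (k, 0)"
  shows "(adj H * A * H) $$ (i, 0) = (if i = 0 then e else 0)"
proof -
  have Hc: "H \<in> carrier_mat n n" and HH: "adj H * H = 1\<^sub>m n" using H by (auto simp: unitary_mat_def)
  have "(adj H * A * H) $$ (i, 0) = (\<Sum>l<n. (adj H * A) $$ (i, l) * H $$ (l, 0))"
    using i n Hc A by (intro mult_mat_index_sum[of _ n n _ n]) auto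
  also have "\<dots> = (\<Sum>l<n. (\<Sum>k<n. cnj (H $$ (k, i)) * A $$ (k, l)) * H $$ (l, 0))"
    using i by (intro sum.cong refl, subst index_adj_mult[OF Hc A]) auto
  also have "\<dots> = (\<Sum>k<n. cnj (H $$ (k, i)) * (\<Sum>l<n. A $$ (k, l) * H $$ (l, 0)))"
    unfolding sum_distrib_left sum_distrib_right mult.assoc by (rule sum.swap)
  also have "\<dots> = e * (\<Sum>k<n. cnj (H $$ (k, i)) * H $$ (k, 0))"
    by (simp add: eig sum_distrib_left mult.left_commute)
  also have "(\<Sum>k<n. cnj (H $$ (k, i)) * H $$ (k, 0)) = (adj H * H) $$ (i, 0)"
    using i n by (rule index_adj_mult[OF Hc Hc, symmetric])
  finally show ?thesis using HH i n by simp
qed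

lemma hermitian_one_block_decomposition:
  assumes B: "B \<in> carrier_mat (Suc m) (Suc m)" and hB: "adj B = B"
    and B0: "\<And>i. i < Suc m \<Longrightarrow> B $$ (i, 0) = (if i = 0 then complex_of_real e else 0)"
    and U': "unitary_mat m U'"
    and B': "mat m m (\<lambda>(i, j). B $$ (Suc i, Suc j)) = U' * rdiag m l' * adj U'"
  shows "\<exists>F l. unitary_mat (Suc m) F \<and> B = F * rdiag (Suc m) l * adj F"
proof -
  have U'c: "U' \<in> carrier_mat m m" using U' by (simp add: unitary_mat_def)
  have B0': "B $$ (0, j) = (if j = 0 then complex_of_real e else 0)" if j: "j < Suc m" for j
  proof -
    have "B $$ (0, j) = cnj (B $$ (j, 0))" using B j by (subst hB[symmetric]) simp
    then show ?thesis using B0[OF j] by simp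
  qed
  define F where "F = mat (Suc m) (Suc m) (\<lambda>(i, j). if i = 0 then (if j = 0 then 1 else 0)
                   else if j = 0 then 0 else U' $$ (i - 1, j - 1))"
  have F: "unitary_mat (Suc m) F" unfolding F_def by (rule unitary_mat_one_block[OF U'])
  have Fc: "F \<in> carrier_mat (Suc m) (Suc m)" by (simp add: F_def)
  define l where "l i = (if i = 0 then e else l' (i - 1))" for i
  have "B = F * rdiag (Suc m) l * adj F"
  proof (rule eq_matI)
    fix i j assume "i < dim_row (F * rdiag (Suc m) l * adj F)" "j < dim_col (F * rdiag (Suc m) l * adj F)"
    then have ij: "i < Suc m" "j < Suc m" using Fc by auto
    have e: "(F * rdiag (Suc m) l * adj F) $$ (i, j) = F $$ (i, 0) * complex_of_real (l 0) * cnj (F $$ (j, 0))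
        + (\<Sum>k<m. F $$ (i, Suc k) * complex_of_real (l (Suc k)) * cnj (F $$ (j, Suc k)))"
      by (subst index_conj_rdiag[OF Fc Fc ij], subst sum.lessThan_Suc_shift, rule refl)
    show "B $$ (i, j) = (F * rdiag (Suc m) l * adj F) $$ (i, j)"
    proof (cases "i = 0 \<or> j = 0")
      case True then show ?thesis using ij B0 B0' unfolding e by (auto simp: F_def l_def)
    next
      case False
      then obtain i' j' where ii: "i = Suc i'" "j = Suc j'" by (cases i; cases j) auto
      have "(\<Sum>k<m. F $$ (i, Suc k) * complex_of_real (l (Suc k)) * cnj (F $$ (j, Suc k)))
           = (U' * rdiag m l' * adj U') $$ (i', j')"
        using ij ii by (subst index_conj_rdiag[OF U'c U'c]) (auto simp: F_def l_def)
      also have "\<dots> = B $$ (i, j)" using ij ii unfolding B'[symmetric] by simp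
      finally show ?thesis using ij ii unfolding e by (auto simp: F_def)
    qed
  qed (use Fc B in auto)
  then show ?thesis using F by blast
qed

theorem hermitian_spectral_decomposition:
  fixes A :: "complex mat"
  assumes "A \<in> carrier_mat n n" "adj A = A"
  shows "\<exists>U l. unitary_mat n U \<and> A = U * rdiag n l * adj U"
  using assms
proof (induct n arbitrary: A)
  case 0
  then have "A = 1\<^sub>m 0 * rdiag 0 (\<lambda>_. 0) * adj (1\<^sub>m 0)" by (intro eq_matI) auto
  moreover have "unitary_mat 0 (1\<^sub>m 0)" by (auto simp: unitary_mat_def)
  ultimately show ?case by blast
next
  case (Suc m A)
  have A: "A \<in> carrier_mat (Suc m) (Suc m)" and hA: "adj A = A" by fact+
  obtain e u where u: "(\<Sum>i<Suc m. cnj (u i) * u i) = 1"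
    and Au: "\<And>k. k < Suc m \<Longrightarrow> (\<Sum>l<Suc m. A $$ (k, l) * u l) = e * u k"
    using unit_eigenvector_exists[OF A] by auto
  obtain H where H: "unitary_mat (Suc m) H" and Hu: "\<And>i. i < Suc m \<Longrightarrow> H $$ (i, 0) = u i"
    using unitary_mat_with_first_column[OF _ u] by auto
  have Hc: "H \<in> carrier_mat (Suc m) (Suc m)" using H by (simp add: unitary_mat_def)
  define B where "B = adj H * A * H"
  have Bc: "B \<in> carrier_mat (Suc m) (Suc m)" using Hc A by (simp add: B_def mult_carrier_mat[of _ "Suc m" "Suc m"])
  have hB: "adj B = B" unfolding B_def by (rule adj_conj_hermitian[OF Hc A hA])
  have B0: "B $$ (i, 0) = (if i = 0 then e else 0)" if "i < Suc m" for i
    unfolding B_def using A H that by (rule conj_eigenvector_first_column) (use Au Hu in auto)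
  have "adj B $$ (0, 0) = cnj (B $$ (0, 0))" using Bc by simp
  then have "cnj e = e" using hB B0[of 0] by simp
  then have "complex_of_real (Re e) = e" by (intro of_real_Re) (simp add: Reals_cnj_iff)
  then have B0_real: "B $$ (i, 0) = (if i = 0 then complex_of_real (Re e) else 0)" if "i < Suc m" for i
    using B0[OF that] by simp
  define B' where "B' = mat m m (\<lambda>(i, j). B $$ (Suc i, Suc j))"
  have "adj B' = B'"
  proof (rule eq_matI)
    fix i j assume "i < dim_row B'" "j < dim_col B'"
    then have ij: "i < m" "j < m" by (auto simp: B'_def)
    have "adj B' $$ (i, j) = adj B $$ (Suc i, Suc j)" using ij Bc by (simp add: B'_def)
    then show "adj B' $$ (i, j) = B' $$ (i, j)" using hB ij by (simp add: B'_def)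
  qed (auto simp: B'_def)
  then obtain U' l' where U': "unitary_mat m U'" and B': "B' = U' * rdiag m l' * adj U'"
    using Suc(1)[of B'] by (auto simp: B'_def)
  obtain F l where F: "unitary_mat (Suc m) F" and BF: "B = F * rdiag (Suc m) l * adj F"
    using hermitian_one_block_decomposition[OF Bc hB B0_real U' B'[unfolded B'_def]] by blast
  have Fc: "F \<in> carrier_mat (Suc m) (Suc m)" using F by (simp add: unitary_mat_def)
  have "A = H * B * adj H" unfolding B_def using unitary_conj_cancel[OF H A] by simp
  also have "\<dots> = (H * F) * rdiag (Suc m) l * adj (H * F)"
    unfolding BF by (rule conj_conj_mat[OF Hc Fc rdiag_carrier_mat])
  finally show ?case using unitary_mat_mult[OF H F] by blast
qed

section \<open>Spectral sums over orthonormal families and the functional calculus\<close>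

definition spectral_sum :: "nat \<Rightarrow> 'k set \<Rightarrow> ('k \<Rightarrow> complex) \<Rightarrow> ('k \<Rightarrow> nat \<Rightarrow> complex) \<Rightarrow> complex mat" where
  "spectral_sum n K a v = mat n n (\<lambda>(i, j). \<Sum>k\<in>K. a k * v k i * cnj (v k j))"

definition orthonormal_family :: "nat \<Rightarrow> 'k set \<Rightarrow> ('k \<Rightarrow> nat \<Rightarrow> complex) \<Rightarrow> bool" where
  "orthonormal_family n K v \<longleftrightarrow>
     (\<forall>k\<in>K. \<forall>k'\<in>K. (\<Sum>i<n. cnj (v k i) * v k' i) = (if k = k' then 1 else 0))"

definition std_basis :: "nat \<Rightarrow> nat \<Rightarrow> complex" where
  "std_basis k i = (if i = k then 1 else 0)"

lemma spectral_sum_carrier_mat [simp]: "spectral_sum n K a v \<in> carrier_mat n n"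
  by (simp add: spectral_sum_def)

lemma spectral_sum_dims [simp]: "dim_row (spectral_sum n K a v) = n" "dim_col (spectral_sum n K a v) = n"
  by (simp_all add: spectral_sum_def)

lemma index_spectral_sum:
  "i < n \<Longrightarrow> j < n \<Longrightarrow> spectral_sum n K a v $$ (i, j) = (\<Sum>k\<in>K. a k * v k i * cnj (v k j))"
  by (simp add: spectral_sum_def)

lemma orthonormal_family_std_basis: "orthonormal_family n {..<n} std_basis"
  by (auto simp: orthonormal_family_def std_basis_def if_distrib[of cnj] mult_delta_left sum.delta cong: if_cong)

lemma rdiag_eq_spectral_sum: "rdiag n d = spectral_sum n {..<n} (\<lambda>i. complex_of_real (d i)) std_basis"
  by (rule eq_matI)
    (auto simp: index_rdiag index_spectral_sum std_basis_def mult_delta_left mult_delta_right sum.delta sum.delta'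
      if_distrib[where f = cnj] cong: if_cong)

lemma spectral_sum_mult:
  assumes fin: "finite K" and on: "orthonormal_family n K v"
  shows "spectral_sum n K a v * spectral_sum n K b v = spectral_sum n K (\<lambda>k. a k * b k) v"
proof (rule eq_matI)
  fix i j assume "i < dim_row (spectral_sum n K (\<lambda>k. a k * b k) v)" "j < dim_col (spectral_sum n K (\<lambda>k. a k * b k) v)"
  then have ij: "i < n" "j < n" by auto
  have "(spectral_sum n K a v * spectral_sum n K b v) $$ (i, j)
      = (\<Sum>r<n. \<Sum>k\<in>K. \<Sum>k'\<in>K. (a k * v k i * cnj (v k r)) * (b k' * v k' r * cnj (v k' j)))"
    using ij by (subst mult_mat_index_sum[of _ n n _ n])
      (auto simp: index_spectral_sum sum_product intro!: sum.cong)
  also have "\<dots> = (\<Sum>k\<in>K. \<Sum>k'\<in>K. (a k * v k i * b k' * cnj (v k' j)) * (\<Sum>r<n. cnj (v k r) * v k' r))"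
    by (subst sum.swap, rule sum.cong[OF refl], subst sum.swap)
      (simp add: sum_distrib_left algebra_simps)
  also have "\<dots> = (\<Sum>k\<in>K. a k * b k * v k i * cnj (v k j))"
    using on fin by (intro sum.cong refl) (auto simp: orthonormal_family_def mult_delta_right sum.delta' cong: if_cong)
  finally show "(spectral_sum n K a v * spectral_sum n K b v) $$ (i, j) = spectral_sum n K (\<lambda>k. a k * b k) v $$ (i, j)"
    using ij by (simp add: index_spectral_sum)
qed auto

lemma spectral_sum_power:
  assumes "finite K" "orthonormal_family n K v" "0 < d"
  shows "spectral_sum n K a v ^\<^sub>m d = spectral_sum n K (\<lambda>k. a k ^ d) v"
  using assms(3)
proof (induct d)
  case (Suc d)
  then show ?case
    by (cases "d = 0") (simp_all add: spectral_sum_mult[OF assms(1,2)] mult.commute)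
qed simp

lemma trace_spectral_sum:
  assumes "orthonormal_family n K v"
  shows "mtrace (spectral_sum n K a v) = (\<Sum>k\<in>K. a k)"
proof -
  have "mtrace (spectral_sum n K a v) = (\<Sum>k\<in>K. a k * (\<Sum>i<n. cnj (v k i) * v k i))"
    by (simp add: mtrace_def index_spectral_sum sum_distrib_left algebra_simps) (rule sum.swap)
  then show ?thesis using assms by (simp add: orthonormal_family_def)
qed

lemma adj_spectral_sum:
  assumes "\<And>k. k \<in> K \<Longrightarrow> cnj (a k) = a k"
  shows "adj (spectral_sum n K a v) = spectral_sum n K a v"
  by (rule eq_matI) (use assms in \<open>auto simp: spectral_sum_def adj_def algebra_simps intro!: sum.cong\<close>)

lemma spectral_sum_scale_vectors:
  "spectral_sum n K c (\<lambda>k i. complex_of_real r * v k i) = spectral_sum n K (\<lambda>k. complex_of_real (r * r) * c k) v"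
  by (rule eq_matI) (auto simp: index_spectral_sum intro!: sum.cong)

lemma rdiag_sandwich_spectral_sum:
  "rdiag n d * spectral_sum n K c v * rdiag n d = spectral_sum n K c (\<lambda>k i. complex_of_real (d i) * v k i)"
proof (rule eq_matI)
  fix i j assume "i < dim_row (spectral_sum n K c (\<lambda>k i. complex_of_real (d i) * v k i))"
    "j < dim_col (spectral_sum n K c (\<lambda>k i. complex_of_real (d i) * v k i))"
  then have ij: "i < n" "j < n" by auto
  then have "(rdiag n d * spectral_sum n K c v * rdiag n d) $$ (i, j)
      = complex_of_real (d i) * spectral_sum n K c v $$ (i, j) * complex_of_real (d j)"
    by (simp add: index_mult_rdiag[of _ n] index_rdiag_mult[of _ n n] mult_carrier_mat[of _ n n] del: index_mult_mat(1))
  then show "(rdiag n d * spectral_sum n K c v * rdiag n d) $$ (i, j)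
      = spectral_sum n K c (\<lambda>k i. complex_of_real (d i) * v k i) $$ (i, j)"
    using ij by (simp add: index_spectral_sum sum_distrib_left sum_distrib_right mult_ac)
qed auto

lemma poly_interpolation:
  fixes f :: "real \<Rightarrow> real"
  assumes "finite S"
  shows "\<exists>q. \<forall>x\<in>S. poly q x = f x"
  using assms
proof (induct S rule: finite_induct)
  case (insert a S)
  then obtain q where q: "\<forall>x\<in>S. poly q x = f x" by blast
  define r where "r = (\<Prod>s\<in>S. [:- s, 1:])"
  have ra: "poly r a \<noteq> 0" using insert(1,2) by (auto simp: r_def poly_prod)
  have rS: "poly r x = 0" if "x \<in> S" for x using insert(1) that by (auto simp: r_def poly_prod)
  have "\<forall>x\<in>insert a S. poly (q + Polynomial.smult ((f a - poly q a) / poly r a) r) x = f x"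
    using q rS ra by auto
  then show ?case by blast
qed simp

lemma index_conj_rdiag_poly:
  assumes U: "unitary_mat n U" and ij: "i < n" "j < n"
  shows "(U * rdiag n (\<lambda>r. poly q (l r)) * adj U) $$ (i, j)
       = (\<Sum>d\<le>degree q. complex_of_real (coeff q d) * ((U * rdiag n l * adj U) ^\<^sub>m d) $$ (i, j))"
proof -
  have Uc: "U \<in> carrier_mat n n" using U by (simp add: unitary_mat_def)
  have "(U * rdiag n (\<lambda>r. poly q (l r)) * adj U) $$ (i, j)
      = (\<Sum>r<n. \<Sum>d\<le>degree q. complex_of_real (coeff q d) * (U $$ (i, r) * complex_of_real (l r ^ d) * cnj (U $$ (j, r))))"
    by (simp add: index_conj_rdiag[OF Uc Uc ij] poly_altdef sum_distrib_left sum_distrib_right algebra_simps)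
  also have "\<dots> = (\<Sum>d\<le>degree q. complex_of_real (coeff q d) * (U * rdiag n (\<lambda>r. l r ^ d) * adj U) $$ (i, j))"
    by (subst sum.swap) (simp add: index_conj_rdiag[OF Uc Uc ij] sum_distrib_left)
  finally show ?thesis by (simp add: conj_rdiag_power[OF U])
qed

lemma index_spectral_sum_poly:
  assumes fin: "finite K" and on: "orthonormal_family n K v" and q0: "poly q 0 = 0" and ij: "i < n" "j < n"
  shows "spectral_sum n K (\<lambda>k. complex_of_real (poly q (lam k))) v $$ (i, j)
       = (\<Sum>d\<le>degree q. complex_of_real (coeff q d) * (spectral_sum n K (\<lambda>k. complex_of_real (lam k)) v ^\<^sub>m d) $$ (i, j))"
proof -
  have "(\<Sum>d\<le>degree q. complex_of_real (coeff q d) * (spectral_sum n K (\<lambda>k. complex_of_real (lam k)) v ^\<^sub>m d) $$ (i, j))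
      = (\<Sum>d\<le>degree q. complex_of_real (coeff q d) * spectral_sum n K (\<lambda>k. complex_of_real (lam k) ^ d) v $$ (i, j))"
  proof (intro sum.cong refl)
    fix d
    show "complex_of_real (coeff q d) * (spectral_sum n K (\<lambda>k. complex_of_real (lam k)) v ^\<^sub>m d) $$ (i, j)
        = complex_of_real (coeff q d) * spectral_sum n K (\<lambda>k. complex_of_real (lam k) ^ d) v $$ (i, j)"
      using q0 by (cases "d = 0") (simp_all add: spectral_sum_power[OF fin on] poly_0_coeff_0)
  qed
  also have "\<dots> = (\<Sum>d\<le>degree q. \<Sum>k\<in>K. complex_of_real (coeff q d) * (complex_of_real (lam k) ^ d * v k i * cnj (v k j)))"
    using ij by (simp add: index_spectral_sum sum_distrib_left)
  also have "\<dots> = spectral_sum n K (\<lambda>k. complex_of_real (poly q (lam k))) v $$ (i, j)"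
    using ij by (subst sum.swap) (simp add: index_spectral_sum poly_altdef sum_distrib_left mult_ac)
  finally show ?thesis by simp
qed

lemma mat_fun_spec_decomp:
  assumes "M \<in> carrier_mat n n" "adj M = M"
  shows "\<exists>U l. unitary_mat n U \<and> M = U * rdiag n l * adj U \<and> mat_fun f M = U * rdiag n (\<lambda>i. f (l i)) * adj U"
proof -
  have "\<exists>x. (\<lambda>(U, l). spec_decomp M U l) x"
    using hermitian_spectral_decomposition[OF assms] assms by (auto simp: spec_decomp_def)
  then have "(\<lambda>(U, l). spec_decomp M U l) (SOME (U, l). spec_decomp M U l)" by (rule someI_ex)
  then obtain U l where X: "(SOME (U, l). spec_decomp M U l) = (U, l)" and sd: "spec_decomp M U l"
    by (auto split: prod.splits)
  have "dim_row M = n" using assms by simp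
  then have "mat_fun f M = U * rdiag n (\<lambda>i. f (l i)) * adj U" by (simp add: mat_fun_def X)
  moreover have "unitary_mat n U \<and> M = U * rdiag n l * adj U"
    using sd unfolding spec_decomp_def \<open>dim_row M = n\<close> by blast
  ultimately show ?thesis by blast
qed

text \<open>\<open>f 0 = 0\<close> is needed because the family need not span the whole space.\<close>

lemma mat_fun_spectral_sum:
  fixes lam :: "'k \<Rightarrow> real"
  assumes fin: "finite K" and on: "orthonormal_family n K v" and f0: "f 0 = 0"
  shows "mat_fun f (spectral_sum n K (\<lambda>k. complex_of_real (lam k)) v)
       = spectral_sum n K (\<lambda>k. complex_of_real (f (lam k))) v"
proof -
  let ?M = "spectral_sum n K (\<lambda>k. complex_of_real (lam k)) v"
  have "adj ?M = ?M" by (rule adj_spectral_sum) simp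
  then obtain U l where U: "unitary_mat n U" and M: "?M = U * rdiag n l * adj U"
    and mf: "mat_fun f ?M = U * rdiag n (\<lambda>i. f (l i)) * adj U"
    using mat_fun_spec_decomp[of ?M n f] by auto
  have Uc: "U \<in> carrier_mat n n" using U by (simp add: unitary_mat_def)
  obtain q where q: "\<forall>x \<in> l ` {..<n} \<union> lam ` K \<union> {0}. poly q x = f x"
    using poly_interpolation[of "l ` {..<n} \<union> lam ` K \<union> {0}" f] fin by auto
  have "U * rdiag n (\<lambda>i. f (l i)) * adj U = U * rdiag n (\<lambda>i. poly q (l i)) * adj U"
    using q by (intro arg_cong2[where f = "(*)"] arg_cong[where f = "\<lambda>d. U * d"] eq_matI)
      (auto simp: index_rdiag)
  moreover have "spectral_sum n K (\<lambda>k. complex_of_real (f (lam k))) v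
      = spectral_sum n K (\<lambda>k. complex_of_real (poly q (lam k))) v"
    using q by (auto simp: spectral_sum_def intro!: sum.cong)
  moreover have "(U * rdiag n (\<lambda>i. poly q (l i)) * adj U) $$ (i, j)
      = spectral_sum n K (\<lambda>k. complex_of_real (poly q (lam k))) v $$ (i, j)" if "i < n" "j < n" for i j
    using q f0 by (simp add: index_conj_rdiag_poly[OF U that] index_spectral_sum_poly[OF fin on _ that] M)
  ultimately show ?thesis using Uc by (auto simp: mf intro!: eq_matI)
qed

lemma vN_entropy_spectral_sum:
  assumes "finite K" "orthonormal_family n K v"
  shows "vN_entropy (spectral_sum n K (\<lambda>k. complex_of_real (lam k)) v) = (\<Sum>k\<in>K. - (lam k * log 2 (lam k)))"
  using assms by (simp add: vN_entropy_def mat_fun_spectral_sum trace_spectral_sum Re_sum)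

lemma kron_one_rdiag:
  assumes "0 < n"
  shows "kron (1\<^sub>m m) (rdiag n d) = rdiag (m * n) (\<lambda>i. d (i mod n))"
proof (rule eq_matI)
  fix i j assume "i < dim_row (rdiag (m * n) (\<lambda>i. d (i mod n)))" "j < dim_col (rdiag (m * n) (\<lambda>i. d (i mod n)))"
  then have "i < m * n" "j < m * n" by auto
  moreover have "i = j \<longleftrightarrow> i div n = j div n \<and> i mod n = j mod n"
    by (metis div_mult_mod_eq)
  ultimately show "kron (1\<^sub>m m) (rdiag n d) $$ (i, j) = rdiag (m * n) (\<lambda>i. d (i mod n)) $$ (i, j)"
    using assms by (auto simp: kron_def index_rdiag less_mult_imp_div_less)
qed (auto simp: kron_def)

lemma density_op_rdiag:
  assumes nn: "\<And>i. i < n \<Longrightarrow> 0 \<le> d i" and s1: "(\<Sum>i<n. d i) = 1"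
  shows "density_op n (rdiag n d)"
proof -
  have "hermitian (rdiag n d)"
    unfolding hermitian_def rdiag_eq_spectral_sum by (auto intro: adj_spectral_sum)
  moreover have "0 \<le> Re (\<Sum>i<n. cnj (v $ i) * (rdiag n d *\<^sub>v v) $ i)" if v: "v \<in> carrier_vec n" for v
  proof -
    have "(\<Sum>i<n. cnj (v $ i) * (rdiag n d *\<^sub>v v) $ i) = (\<Sum>i<n. complex_of_real (d i * (cmod (v $ i))\<^sup>2))"
      using v by (intro sum.cong refl, subst index_rdiag_mult_vec)
        (simp_all add: mult.left_commute[of "cnj _"] cnj_mult_self)
    then have "Re (\<Sum>i<n. cnj (v $ i) * (rdiag n d *\<^sub>v v) $ i) = (\<Sum>i<n. d i * (cmod (v $ i))\<^sup>2)"
      by (simp add: Re_sum del: index_mult_mat_vec)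
    moreover have "(\<Sum>i<n. d i * (cmod (v $ i))\<^sup>2) \<ge> 0" using nn by (intro sum_nonneg) auto
    ultimately show ?thesis by linarith
  qed
  moreover have "mtrace (rdiag n d) = 1"
    using s1 by (simp add: rdiag_eq_spectral_sum trace_spectral_sum[OF orthonormal_family_std_basis] flip: of_real_sum)
  ultimately show ?thesis by (auto simp: density_op_def psd_def)
qed

lemma sum_lessThan_mult: "(\<Sum>s<m * n. f s) = (\<Sum>u<m. \<Sum>v<n. f (u * n + v :: nat))"
  by (simp add: sum_mult_product add.commute)

lemma sum_swap_1_23: "(\<Sum>k\<in>A. \<Sum>a\<in>B. \<Sum>b\<in>C. f k a b) = (\<Sum>a\<in>B. \<Sum>b\<in>C. \<Sum>k\<in>A. f k a b)"
  by (subst sum.swap) (rule sum.cong[OF refl], rule sum.swap)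

lemma sum_swap_12_34:
  "(\<Sum>a\<in>A. \<Sum>b\<in>B. \<Sum>c\<in>C. \<Sum>d\<in>D. f a b c d) = (\<Sum>c\<in>C. \<Sum>d\<in>D. \<Sum>a\<in>A. \<Sum>b\<in>B. f a b c d)"
proof -
  have "(\<Sum>a\<in>A. \<Sum>b\<in>B. \<Sum>c\<in>C. \<Sum>d\<in>D. f a b c d) = (\<Sum>a\<in>A. \<Sum>c\<in>C. \<Sum>d\<in>D. \<Sum>b\<in>B. f a b c d)"
    by (rule sum.cong[OF refl], rule sum_swap_1_23)
  also have "\<dots> = (\<Sum>c\<in>C. \<Sum>d\<in>D. \<Sum>a\<in>A. \<Sum>b\<in>B. f a b c d)"
    by (rule sum_swap_1_23)
  finally show ?thesis .
qed

lemma index_less_mult: "u < (m::nat) \<Longrightarrow> v < n \<Longrightarrow> u * n + v < m * n"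
proof -
  assume uv: "u < m" "v < n"
  then have "u * n + v < (u + 1) * n" by simp
  also have "\<dots> \<le> m * n" using uv by (intro mult_right_mono) auto
  finally show ?thesis .
qed

lemma mod_add_right_inj: "k < p \<Longrightarrow> k' < p \<Longrightarrow> (k + x) mod p = (k' + x) mod (p::nat) \<Longrightarrow> k = k'"
  by (metis cong_def cong_add_rcancel_nat mod_less)

lemma sum_mod_shift:
  assumes "0 < (p::nat)"
  shows "(\<Sum>y<p. g ((y + c) mod p)) = (\<Sum>y<p. g y)"
proof -
  have inj: "inj_on (\<lambda>y. (y + c) mod p) {..<p}"
    by (auto simp: inj_on_def intro: mod_add_right_inj)
  moreover have "(\<lambda>y. (y + c) mod p) ` {..<p} = {..<p}"
    by (rule endo_inj_surj) (use inj assms in auto)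
  ultimately show ?thesis using sum.reindex[OF inj, of g] by simp
qed

lemma sum_mod_neg:
  assumes "0 < (p::nat)"
  shows "(\<Sum>y<p. g ((p - y) mod p)) = (\<Sum>y<p. g y)"
proof -
  have val: "(p - y) mod p = (if y = 0 then 0 else p - y)" if "y < p" for y
    using that by auto
  have inj: "inj_on (\<lambda>y. (p - y) mod p) {..<p}"
  proof (rule inj_onI)
    fix x y assume "x \<in> {..<p}" "y \<in> {..<p}" "(p - x) mod p = (p - y) mod p"
    then show "x = y" using val[of x] val[of y] by (auto split: if_splits)
  qed
  moreover have "(\<lambda>y. (p - y) mod p) ` {..<p} = {..<p}"
    by (rule endo_inj_surj) (use inj assms in auto)
  ultimately show ?thesis using sum.reindex[OF inj, of g] by simp
qed

section \<open>Roots of unity and generalized Pauli operators\<close>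

locale qudit =
  fixes p :: nat
  assumes p_gt_1: "1 < p"
begin

lemma p_pos: "0 < p"
  using p_gt_1 by simp

lemma omega_power: "omega p ^ k = cis (2 * pi * real k / real p)"
  by (simp add: omega_def Complex.DeMoivre algebra_simps)

lemma omega_power_self: "omega p ^ p = 1"
  using p_pos by (simp add: omega_power)

lemma omega_power_mod: "omega p ^ k = omega p ^ (k mod p)"
proof -
  have "omega p ^ k = omega p ^ (p * (k div p) + k mod p)" by simp
  also have "\<dots> = (omega p ^ p) ^ (k div p) * omega p ^ (k mod p)" by (simp only: power_add power_mult)
  finally show ?thesis by (simp add: omega_power_self)
qed

lemma omega_power_cong: "k mod p = m mod p \<Longrightarrow> omega p ^ k = omega p ^ m"
  by (metis omega_power_mod)

lemma cnj_omega_power_mult: "cnj (omega p ^ k) * omega p ^ k = 1"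
  by (simp add: omega_power cis_cnj cis_mult)

lemma omega_power_mult_cnj: "omega p ^ k * cnj (omega p ^ k) = 1"
  using cnj_omega_power_mult[of k] by (simp only: mult.commute)

lemma omega_power_neq_1:
  assumes "0 < k" "k < p"
  shows "omega p ^ k \<noteq> 1"
proof
  assume "omega p ^ k = 1"
  then have "cos (2 * pi * real k / real p) = 1" unfolding omega_power
    by (metis Re_complex_of_real cis.sel(1) one_complex.sel(1))
  then obtain n :: int where n: "2 * pi * real k / real p = of_int n * 2 * pi"
    using cos_one_2pi_int by blast
  then have "real k = of_int n * real p" using p_pos by (simp add: field_simps)
  moreover have "0 < real k" "real k < real p" using assms by auto
  ultimately have "0 < n" "n < 1" using p_pos
    by (auto simp: zero_less_mult_iff mult_less_cancel_right)
  then show False by simp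
qed

lemma sum_omega_power: "(\<Sum>b<p. omega p ^ (k * b)) = (if k mod p = 0 then of_nat p else 0)"
proof (cases "k mod p = 0")
  case True
  have "k * b mod p = 0 mod p" for b
    using True by (metis mod_mult_left_eq mult_zero_left mod_0)
  then have "omega p ^ (k * b) = 1" for b
    using omega_power_cong[of "k * b" 0] by simp
  then show ?thesis using True by simp
next
  case False
  let ?w = "omega p ^ k"
  have "?w \<noteq> 1" using omega_power_mod[of k] omega_power_neq_1[of "k mod p"] False p_pos by simp
  moreover have "?w ^ p = 1" by (metis mult.commute omega_power_self power_mult power_one)
  ultimately have "(\<Sum>b<p. ?w ^ b) = 0" by (simp add: sum_gp_strict)
  then show ?thesis using False by (simp add: power_mult)
qed

lemma cnj_omega_power:
  assumes "z' < p"
  shows "cnj (omega p ^ (z' * b)) = omega p ^ ((p - z') * b)"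
proof -
  have "omega p ^ (z' * b) * omega p ^ ((p - z') * b) = omega p ^ (p * b)"
    using assms by (simp add: power_add[symmetric] add_mult_distrib[symmetric])
  also have "\<dots> = 1" by (simp add: power_mult omega_power_self)
  finally have E: "omega p ^ (z' * b) * omega p ^ ((p - z') * b) = 1" .
  have "cnj (omega p ^ (z' * b)) = (cnj (omega p ^ (z' * b)) * omega p ^ (z' * b)) * omega p ^ ((p - z') * b)"
    by (simp only: mult.assoc E mult_1_right)
  also have "\<dots> = omega p ^ ((p - z') * b)"
    by (simp only: cnj_omega_power_mult mult_1_left)
  finally show ?thesis .
qed

lemma Xop_carrier_mat [simp]: "Xop p \<in> carrier_mat p p"
  by (simp add: Xop_def)

lemma Zop_carrier_mat [simp]: "Zop p \<in> carrier_mat p p"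
  by (simp add: Zop_def)

lemma Wop_carrier_mat [simp]: "Wop p x z \<in> carrier_mat p p"
  unfolding Wop_def by (rule mult_carrier_mat[OF pow_carrier_mat pow_carrier_mat]) simp_all

lemma Wop_dims [simp]: "dim_row (Wop p x z) = p" "dim_col (Wop p x z) = p"
  using carrier_matD[OF Wop_carrier_mat[of x z]] by auto

lemma index_Xop_power:
  "i < p \<Longrightarrow> j < p \<Longrightarrow> (Xop p ^\<^sub>m x) $$ (i, j) = (if i = (j + x) mod p then 1 else 0)"
proof (induct x arbitrary: i j)
  case (Suc x)
  have "(Xop p ^\<^sub>m Suc x) $$ (i, j) = (\<Sum>k<p. (Xop p ^\<^sub>m x) $$ (i, k) * Xop p $$ (k, j))"
    using Suc by (simp add: mult_mat_index_sum[of _ p p _ p] del: index_mult_mat(1))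
  also have "\<dots> = (\<Sum>k<p. (if i = (k + x) mod p then 1 else 0) * (if k = (j + 1) mod p then 1 else 0))"
    using Suc by (intro sum.cong refl) (simp add: Xop_def)
  also have "\<dots> = (if i = ((j + 1) mod p + x) mod p then 1 else 0)"
    using p_pos by (simp add: mult_delta_right sum.delta)
  finally show ?case by (simp add: mod_add_left_eq)
qed (simp add: Xop_def)

lemma index_Zop_power:
  "i < p \<Longrightarrow> j < p \<Longrightarrow> (Zop p ^\<^sub>m z) $$ (i, j) = (if i = j then omega p ^ (j * z) else 0)"
proof (induct z arbitrary: i j)
  case (Suc z)
  have "(Zop p ^\<^sub>m Suc z) $$ (i, j) = (\<Sum>k<p. (Zop p ^\<^sub>m z) $$ (i, k) * Zop p $$ (k, j))"
    using Suc by (simp add: mult_mat_index_sum[of _ p p _ p] del: index_mult_mat(1))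
  also have "\<dots> = (\<Sum>k<p. if k = i then (if i = j then omega p ^ (i * z) * omega p ^ j else 0) else 0)"
    using Suc by (intro sum.cong refl) (auto simp: Zop_def)
  finally show ?case
    using Suc by (simp add: power_add mult.commute)
qed (simp add: Zop_def)

lemma index_Wop:
  assumes "i < p" "j < p"
  shows "Wop p x z $$ (i, j) = (if i = (j + x) mod p then omega p ^ (z * j) else 0)"
proof -
  have "Wop p x z $$ (i, j) = (\<Sum>k<p. (Xop p ^\<^sub>m x) $$ (i, k) * (Zop p ^\<^sub>m z) $$ (k, j))"
    unfolding Wop_def using assms by (intro mult_mat_index_sum[of _ p p _ p] pow_carrier_mat) auto
  also have "\<dots> = (\<Sum>k<p. if k = j then (Xop p ^\<^sub>m x) $$ (i, j) * omega p ^ (j * z) else 0)"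
    using assms by (intro sum.cong refl) (auto simp: index_Zop_power)
  finally show ?thesis using assms by (simp add: index_Xop_power mult.commute)
qed

lemma Wop_columns_orthonormal:
  assumes "k < p" "k' < p"
  shows "(\<Sum>a<p. Wop p x z $$ (a, k) * cnj (Wop p x z $$ (a, k'))) = (if k = k' then 1 else 0)"
proof -
  have "(\<Sum>a<p. Wop p x z $$ (a, k) * cnj (Wop p x z $$ (a, k')))
      = (\<Sum>a<p. if a = (k + x) mod p then
           (if (k + x) mod p = (k' + x) mod p then omega p ^ (z * k) * cnj (omega p ^ (z * k')) else 0) else 0)"
    using assms by (intro sum.cong refl) (auto simp: index_Wop)
  also have "\<dots> = (if (k + x) mod p = (k' + x) mod p then omega p ^ (z * k) * cnj (omega p ^ (z * k')) else 0)"
    using p_pos by simp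
  also have "\<dots> = (if k = k' then 1 else 0)"
    using assms mod_add_right_inj[of k p k' x] omega_power_mult_cnj[of "z * k'"] by (auto simp del: complex_cnj_power)
  finally show ?thesis .
qed

lemma Wop_hs_orthogonal:
  assumes "x < p" "z < p" "x' < p" "z' < p"
  shows "(\<Sum>a<p. \<Sum>b<p. Wop p x z $$ (a, b) * cnj (Wop p x' z' $$ (a, b)))
       = (if x = x' \<and> z = z' then of_nat p else 0)"
proof -
  have "(\<Sum>a<p. \<Sum>b<p. Wop p x z $$ (a, b) * cnj (Wop p x' z' $$ (a, b)))
      = (\<Sum>b<p. \<Sum>a<p. Wop p x z $$ (a, b) * cnj (Wop p x' z' $$ (a, b)))" by (rule sum.swap)
  also have "\<dots> = (\<Sum>b<p. if x = x' then omega p ^ ((z + (p - z')) * b) else 0)"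
  proof (intro sum.cong refl)
    fix b assume "b \<in> {..<p}"
    then have "(\<Sum>a<p. Wop p x z $$ (a, b) * cnj (Wop p x' z' $$ (a, b)))
        = (\<Sum>a<p. if a = (b + x) mod p then
             (if (b + x) mod p = (b + x') mod p then omega p ^ (z * b) * cnj (omega p ^ (z' * b)) else 0) else 0)"
      using assms by (intro sum.cong refl) (auto simp: index_Wop)
    also have "\<dots> = (if (b + x) mod p = (b + x') mod p then omega p ^ (z * b) * cnj (omega p ^ (z' * b)) else 0)"
      using p_pos by simp
    moreover have "omega p ^ (z * b) * cnj (omega p ^ (z' * b)) = omega p ^ ((z + (p - z')) * b)"
      using assms by (simp only: cnj_omega_power power_add[symmetric] add_mult_distrib[symmetric])
    moreover have "(b + x) mod p = (b + x') mod p \<longleftrightarrow> x = x'"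
      using assms mod_add_right_inj[of x p x' b] by (auto simp: add.commute)
    ultimately show "(\<Sum>a<p. Wop p x z $$ (a, b) * cnj (Wop p x' z' $$ (a, b)))
        = (if x = x' then omega p ^ ((z + (p - z')) * b) else 0)"
      by (simp only:)
  qed
  also have "\<dots> = (if x = x' then (\<Sum>b<p. omega p ^ ((z + (p - z')) * b)) else 0)" by simp
  also have "\<dots> = (if x = x' \<and> z = z' then of_nat p else 0)"
  proof -
    have "(z + (p - z')) mod p = 0 \<longleftrightarrow> z = z'"
    proof
      assume m0: "(z + (p - z')) mod p = 0"
      show "z = z'"
      proof (cases "z' \<le> z")
        case True
        then have "z + (p - z') = (z - z') + p" using assms by simp
        then have "(z - z') mod p = 0" using m0 by simp
        then show ?thesis using True assms by simp
      next
        case False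
        then have "z + (p - z') < p" "0 < z + (p - z')" using assms by auto
        then show ?thesis using m0 by simp
      qed
    qed (use assms in simp)
    then show ?thesis using sum_omega_power[of "z + (p - z')"] by auto
  qed
  finally show ?thesis .
qed

lemma Wop_preserves_inner:
  assumes "x < p"
  shows "(\<Sum>k<p. (\<Sum>b1<p. Wop p x z $$ (k, b1) * f b1) * cnj (\<Sum>b2<p. Wop p x z $$ (k, b2) * g b2))
       = (\<Sum>b<p. f b * cnj (g b))"
proof -
  have "(\<Sum>k<p. (\<Sum>b1<p. Wop p x z $$ (k, b1) * f b1) * cnj (\<Sum>b2<p. Wop p x z $$ (k, b2) * g b2))
      = (\<Sum>k<p. \<Sum>b1<p. \<Sum>b2<p. (f b1 * cnj (g b2)) * (Wop p x z $$ (k, b1) * cnj (Wop p x z $$ (k, b2))))"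
    by (simp add: sum_product cnj_sum mult_ac)
  also have "\<dots> = (\<Sum>b1<p. \<Sum>b2<p. (f b1 * cnj (g b2)) * (\<Sum>k<p. Wop p x z $$ (k, b1) * cnj (Wop p x z $$ (k, b2))))"
    by (subst sum_swap_1_23) (simp add: sum_distrib_left)
  also have "\<dots> = (\<Sum>b<p. f b * cnj (g b))"
    by (simp add: Wop_columns_orthonormal mult_delta_right sum.delta' cong: if_cong)
  finally show ?thesis .
qed

text \<open>The transpose trick \<open>(I \<otimes> W) (W\<^sub>0 \<otimes> I) |\<Phi>\<rangle> = (W\<^sub>0 W\<^sup>T \<otimes> I) |\<Phi>\<rangle>\<close> in coordinates:
  \<open>W(x\<^sub>0, z\<^sub>0) W(x, z)\<^sup>T\<close> is, up to a phase, \<open>W(x\<^sub>0 - x, z\<^sub>0 + z)\<close>.\<close>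

lemma Wop_mult_transpose_index:
  assumes a: "a < p" and b: "b < p" and x: "x < p" and x0: "x0 < p"
  shows "(\<Sum>b1<p. Wop p x z $$ (b, b1) * Wop p x0 z0 $$ (a, b1))
       = cnj (omega p ^ ((z + z0) * x)) * Wop p ((x0 + p - x) mod p) ((z + z0) mod p) $$ (a, b)"
proof -
  let ?c = "(b + p - x) mod p"
  let ?\<zeta> = "omega p ^ ((z + z0) * x)"
  have c: "?c < p" using p_pos by simp
  have cx: "(?c + x) mod p = b"
  proof -
    have "(?c + x) mod p = (b + p - x + x) mod p" by (simp add: mod_add_left_eq)
    also have "b + p - x + x = b + p" using x by simp
    finally show ?thesis using b by simp
  qed
  have eq: "b = (b1 + x) mod p \<longleftrightarrow> b1 = ?c" if "b1 < p" for b1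
    using that c cx mod_add_right_inj[of b1 p ?c x] by auto
  have cond: "(?c + x0) mod p = (b + (x0 + p - x) mod p) mod p"
  proof -
    have "(?c + x0) mod p = (b + p - x + x0) mod p" by (simp add: mod_add_left_eq)
    also have "b + p - x + x0 = b + (x0 + p - x)" using x by simp
    finally show ?thesis by (simp add: mod_add_right_eq)
  qed
  have cg: "[(z + z0) * (x + ?c) = (z + z0) mod p * b] (mod p)"
    using cx b by (intro cong_mult) (simp_all add: cong_def add.commute)
  have "omega p ^ (z * ?c) * omega p ^ (z0 * ?c) = omega p ^ ((z + z0) * ?c)"
    by (simp add: power_add add_mult_distrib)
  also have "\<dots> = (cnj ?\<zeta> * ?\<zeta>) * omega p ^ ((z + z0) * ?c)"
    by (simp only: cnj_omega_power_mult mult_1_left)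
  also have "\<dots> = cnj ?\<zeta> * omega p ^ ((z + z0) * (x + ?c))"
    by (simp only: mult.assoc power_add[symmetric] add_mult_distrib2)
  also have "omega p ^ ((z + z0) * (x + ?c)) = omega p ^ ((z + z0) mod p * b)"
    using cg by (intro omega_power_cong) (simp add: cong_def)
  finally have ph: "omega p ^ (z * ?c) * omega p ^ (z0 * ?c) = cnj ?\<zeta> * omega p ^ ((z + z0) mod p * b)" .
  have "(\<Sum>b1<p. Wop p x z $$ (b, b1) * Wop p x0 z0 $$ (a, b1))
      = (\<Sum>b1<p. if b1 = ?c then omega p ^ (z * ?c) * Wop p x0 z0 $$ (a, ?c) else 0)"
    using b eq by (intro sum.cong refl) (auto simp: index_Wop)
  also have "\<dots> = omega p ^ (z * ?c) * Wop p x0 z0 $$ (a, ?c)"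
    using c by simp
  also have "\<dots> = (if a = (b + (x0 + p - x) mod p) mod p then cnj ?\<zeta> * omega p ^ ((z + z0) mod p * b) else 0)"
    using a c cond ph by (simp add: index_Wop)
  also have "\<dots> = cnj ?\<zeta> * Wop p ((x0 + p - x) mod p) ((z + z0) mod p) $$ (a, b)"
    using a b by (simp add: index_Wop)
  finally show ?thesis .
qed

end

section \<open>The state and its reduced states\<close>

lemma kron_carrier_mat [simp]: "A \<in> carrier_mat m1 n1 \<Longrightarrow> B \<in> carrier_mat m2 n2 \<Longrightarrow> kron A B \<in> carrier_mat (m1 * m2) (n1 * n2)"
  unfolding carrier_mat_def by (simp add: kron_def)

lemma kron_dims [simp]: "dim_row (kron A B) = dim_row A * dim_row B" "dim_col (kron A B) = dim_col A * dim_col B"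
  by (simp_all add: kron_def)

lemma index_kron:
  assumes A: "A \<in> carrier_mat m1 n1" and B: "B \<in> carrier_mat m2 n2"
    and "u < m1" "v < m2" "u' < n1" "v' < n2"
  shows "kron A B $$ (u * m2 + v, u' * n2 + v') = A $$ (u, u') * B $$ (v, v')"
  using assms index_less_mult[of u m1 v m2] index_less_mult[of u' n1 v' n2] by (auto simp: kron_def)

lemma index_kron_col:
  assumes A: "A \<in> carrier_mat m1 1" and B: "B \<in> carrier_mat m2 1"
    and "u < m1" "v < m2"
  shows "kron A B $$ (u * m2 + v, 0) = A $$ (u, 0) * B $$ (v, 0)"
  using index_kron[OF A B assms(3,4), of 0 0] by simp

lemma index_smult_mat_carrier: "A \<in> carrier_mat n m \<Longrightarrow> i < n \<Longrightarrow> j < m \<Longrightarrow> (c \<cdot>\<^sub>m A) $$ (i, j) = c * A $$ (i, j)"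
  by auto

lemma sum_delta_pair:
  assumes "x0 < (m::nat)" "z0 < (n::nat)"
  shows "(\<Sum>x<m. \<Sum>z<n. if x = x0 \<and> z = z0 then f x z else 0) = f x0 z0"
proof -
  have "(\<Sum>z<n. if x = x0 \<and> z = z0 then f x z else 0) = (if x = x0 then f x z0 else 0)" for x
    using assms by (cases "x = x0") (auto simp: sum.delta)
  then show ?thesis using assms by (simp add: sum.delta)
qed

lemma index_msum: "i < n \<Longrightarrow> j < m \<Longrightarrow> msum n m f S $$ (i, j) = (\<Sum>k\<in>S. f k $$ (i, j))"
  by (simp add: msum_def)

lemma conj_rank_one:
  assumes G: "G \<in> carrier_mat n n" and v: "v \<in> carrier_mat n 1"
  shows "G * (v * adj v) * adj G = (G * v) * adj (G * v)"
proof -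
  have av: "adj v \<in> carrier_mat 1 n" and aG: "adj G \<in> carrier_mat n n" using G v by auto
  have "G * (v * adj v) = (G * v) * adj v" by (rule assoc_mult_mat[OF G v av, symmetric])
  moreover have "(G * v) * adj v * adj G = (G * v) * (adj v * adj G)"
    by (rule assoc_mult_mat[OF mult_carrier_mat[OF G v] av aG])
  moreover have "adj v * adj G = adj (G * v)" by (rule adj_mult_mat[OF G v, symmetric])
  ultimately show ?thesis by simp
qed

lemma sum_if_const: "(\<Sum>k\<in>S. if P then f k else 0) = (if P then (\<Sum>k\<in>S. f k) else 0)"
  by auto

lemma ket_carrier_mat [simp]: "ket n k \<in> carrier_mat n 1" by (simp add: ket_def)

lemma mult_add_div_eq: "e < m \<Longrightarrow> (a * m + e) div m = (a::nat)"
  by simp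

lemma mult_add_eq_iff:
  assumes "z < p" "z' < (p::nat)"
  shows "x * p + z = x' * p + z' \<longleftrightarrow> x = x' \<and> z = z'"
proof
  assume h: "x * p + z = x' * p + z'"
  then have "x = x'" using mult_add_div_eq[OF assms(1), of x] mult_add_div_eq[OF assms(2), of x'] by simp
  with h show "x = x' \<and> z = z'" by simp
qed simp

lemma mult_square_add_mod_eq: "(a * (p * p) + e) mod p = e mod (p::nat)"
  by (simp add: mult.assoc[symmetric])

abbreviation Wop_B :: "nat \<Rightarrow> nat \<Rightarrow> nat \<Rightarrow> complex mat" where
  "Wop_B p x z \<equiv> kron (kron (1\<^sub>m p) (Wop p x z)) (1\<^sub>m (p * p))"

text \<open>\<open>bell_vec p (\<alpha>, \<beta>)\<close> is the generalized Bell vector \<open>(W(\<alpha>, \<beta>) \<otimes> I) |\<Phi>\<rangle>\<close>, and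
  \<open>psi_slice p P k\<close> is \<open>\<surd>p\<close> times the vector of \<open>AE\<close> that \<open>|\<Psi>\<rangle>\<close> attaches to the basis state
  \<open>|k\<rangle>\<^sub>B\<close>.\<close>

definition bell_vec :: "nat \<Rightarrow> nat \<times> nat \<Rightarrow> nat \<Rightarrow> complex" where
  "bell_vec q = (\<lambda>(\<alpha>, \<beta>) i. Wop q \<alpha> \<beta> $$ (i div q, i mod q) * complex_of_real (1 / sqrt (real q)))"

definition psi_slice :: "nat \<Rightarrow> (nat \<Rightarrow> nat \<Rightarrow> real) \<Rightarrow> nat \<Rightarrow> nat \<Rightarrow> complex" where
  "psi_slice q P k i = complex_of_real (sqrt (P (i mod (q * q) div q) (i mod q))) * Wop q (i mod (q * q) div q) (i mod q) $$ (i div (q * q), k)"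

context qudit
begin

lemma Phi_carrier_mat [simp]: "Phi p \<in> carrier_mat (p * p) 1" by (simp add: Phi_def)

lemma index_Phi: "u < p \<Longrightarrow> v < p \<Longrightarrow> Phi p $$ (u * p + v, 0) = (if u = v then complex_of_real (1 / sqrt (real p)) else 0)"
  using index_less_mult[of u p v p] by (simp add: Phi_def)

lemma index_Wop_Phi:
  assumes a: "a < p" and b: "b < p"
  shows "(kron (Wop p x z) (1\<^sub>m p) * Phi p) $$ (a * p + b, 0) = Wop p x z $$ (a, b) * complex_of_real (1 / sqrt (real p))"
proof -
  have K: "kron (Wop p x z) (1\<^sub>m p) \<in> carrier_mat (p * p) (p * p)" using Wop_carrier_mat by simp
  have "(kron (Wop p x z) (1\<^sub>m p) * Phi p) $$ (a * p + b, 0)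
      = (\<Sum>s<p * p. kron (Wop p x z) (1\<^sub>m p) $$ (a * p + b, s) * Phi p $$ (s, 0))"
    by (rule mult_mat_index_sum[OF K Phi_carrier_mat]) (use index_less_mult[OF a b] in auto)
  also have "\<dots> = (\<Sum>u<p. \<Sum>v<p. kron (Wop p x z) (1\<^sub>m p) $$ (a * p + b, u * p + v) * Phi p $$ (u * p + v, 0))"
    by (rule sum_lessThan_mult)
  also have "\<dots> = (\<Sum>u<p. \<Sum>v<p. Wop p x z $$ (a, u) * (if b = v then 1 else 0) * (if u = v then complex_of_real (1 / sqrt (real p)) else 0))"
    using a b by (intro sum.cong refl) (simp add: index_kron[OF Wop_carrier_mat one_carrier_mat] index_Phi)
  also have "\<dots> = (\<Sum>u<p. Wop p x z $$ (a, u) * (if u = b then complex_of_real (1 / sqrt (real p)) else 0))"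
    using b by (intro sum.cong refl) (simp add: mult_delta_left mult_delta_right)
  also have "\<dots> = Wop p x z $$ (a, b) * complex_of_real (1 / sqrt (real p))"
    using b by (simp add: mult_delta_right)
  finally show ?thesis .
qed

lemma Wop_Phi_carrier_mat: "kron (Wop p x z) (1\<^sub>m p) * Phi p \<in> carrier_mat (p * p) 1"
  by (rule mult_carrier_mat[OF kron_carrier_mat[OF Wop_carrier_mat one_carrier_mat] Phi_carrier_mat])

lemma Psi_carrier_mat: "Psi p P \<in> carrier_mat (p * p * (p * p)) 1" by (simp add: Psi_def msum_def)

lemma index_Psi:
  assumes a: "a < p" and b: "b < p" and x0: "x0 < p" and z0: "z0 < p"
  shows "Psi p P $$ ((a * p + b) * (p * p) + (x0 * p + z0), 0)
       = complex_of_real (sqrt (P x0 z0)) * Wop p x0 z0 $$ (a, b) * complex_of_real (1 / sqrt (real p))"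
proof -
  have q: "a * p + b < p * p" using index_less_mult[OF a b] .
  have e: "x0 * p + z0 < p * p" using index_less_mult[OF x0 z0] .
  have r: "(a * p + b) * (p * p) + (x0 * p + z0) < p * p * (p * p)" using index_less_mult[OF q e] .
  have "Psi p P $$ ((a * p + b) * (p * p) + (x0 * p + z0), 0)
      = (\<Sum>(x, z)\<in>{..<p} \<times> {..<p}. complex_of_real (sqrt (P x z)) *
          (kron (kron (Wop p x z) (1\<^sub>m p) * Phi p) (ket (p * p) (x * p + z))) $$ ((a * p + b) * (p * p) + (x0 * p + z0), 0))"
    unfolding Psi_def using r
    by (subst index_msum) (auto intro!: sum.cong simp: case_prod_beta index_smult_mat_carrier[OF kron_carrier_mat[OF Wop_Phi_carrier_mat ket_carrier_mat]])
  also have "\<dots> = (\<Sum>(x, z)\<in>{..<p} \<times> {..<p}. complex_of_real (sqrt (P x z)) *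
          ((Wop p x z $$ (a, b) * complex_of_real (1 / sqrt (real p))) * (if x0 * p + z0 = x * p + z then 1 else 0)))"
  proof (intro sum.cong refl, clarify)
    fix x z
    have "kron (kron (Wop p x z) (1\<^sub>m p) * Phi p) (ket (p * p) (x * p + z)) $$ ((a * p + b) * (p * p) + (x0 * p + z0), 0)
        = (kron (Wop p x z) (1\<^sub>m p) * Phi p) $$ (a * p + b, 0) * ket (p * p) (x * p + z) $$ (x0 * p + z0, 0)"
      by (rule index_kron_col[OF Wop_Phi_carrier_mat ket_carrier_mat q e])
    then show "complex_of_real (sqrt (P x z)) * kron (kron (Wop p x z) (1\<^sub>m p) * Phi p) (ket (p * p) (x * p + z)) $$ ((a * p + b) * (p * p) + (x0 * p + z0), 0)
       = complex_of_real (sqrt (P x z)) * ((Wop p x z $$ (a, b) * complex_of_real (1 / sqrt (real p))) * (if x0 * p + z0 = x * p + z then 1 else 0))"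
      using index_Wop_Phi[OF a b, of x z] e by (simp add: ket_def)
  qed
  also have "\<dots> = (\<Sum>x<p. \<Sum>z<p. complex_of_real (sqrt (P x z)) *
          ((Wop p x z $$ (a, b) * complex_of_real (1 / sqrt (real p))) * (if x = x0 \<and> z = z0 then 1 else 0)))"
  proof -
    have eq: "x0 * p + z0 = x * p + z \<longleftrightarrow> x = x0 \<and> z = z0" if "x < p" "z < p" for x z
      using mult_add_eq_iff[OF z0 that(2)] by auto
    show ?thesis unfolding sum.cartesian_product[symmetric] by (intro sum.cong refl) (auto simp: eq)
  qed
  also have "\<dots> = complex_of_real (sqrt (P x0 z0)) * Wop p x0 z0 $$ (a, b) * complex_of_real (1 / sqrt (real p))"
    using x0 z0 by (simp add: mult_delta_right sum_delta_pair)
  finally show ?thesis .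
qed

lemma Wop_B_carrier_mat: "Wop_B p x z \<in> carrier_mat (p * p * (p * p)) (p * p * (p * p))"
  by (rule kron_carrier_mat[OF kron_carrier_mat[OF one_carrier_mat Wop_carrier_mat] one_carrier_mat])

lemma index_Wop_B:
  assumes "a < p" "b < p" "a' < p" "b' < p" "e < p * p" "e' < p * p"
  shows "Wop_B p x z $$ ((a * p + b) * (p * p) + e, (a' * p + b') * (p * p) + e')
       = (if a = a' then 1 else 0) * Wop p x z $$ (b, b') * (if e = e' then 1 else 0)"
proof -
  have "Wop_B p x z $$ ((a * p + b) * (p * p) + e, (a' * p + b') * (p * p) + e')
      = kron (1\<^sub>m p) (Wop p x z) $$ (a * p + b, a' * p + b') * 1\<^sub>m (p * p) $$ (e, e')"
    by (rule index_kron[OF kron_carrier_mat[OF one_carrier_mat Wop_carrier_mat] one_carrier_mat])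
       (use assms index_less_mult in auto)
  also have "kron (1\<^sub>m p) (Wop p x z) $$ (a * p + b, a' * p + b') = 1\<^sub>m p $$ (a, a') * Wop p x z $$ (b, b')"
    by (rule index_kron[OF one_carrier_mat Wop_carrier_mat]) (use assms in auto)
  finally show ?thesis using assms by simp
qed

lemma index_Wop_B_Psi:
  assumes a: "a < p" and b: "b < p" and e: "e < p * p"
  shows "(Wop_B p x z * Psi p P) $$ ((a * p + b) * (p * p) + e, 0)
       = (\<Sum>b1<p. Wop p x z $$ (b, b1) * Psi p P $$ ((a * p + b1) * (p * p) + e, 0))"
proof -
  let ?G = "Wop_B p x z"
  have r: "(a * p + b) * (p * p) + e < p * p * (p * p)" using index_less_mult[OF index_less_mult[OF a b] e] .
  have "(?G * Psi p P) $$ ((a * p + b) * (p * p) + e, 0)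
      = (\<Sum>s<p * p * (p * p). ?G $$ ((a * p + b) * (p * p) + e, s) * Psi p P $$ (s, 0))"
    by (rule mult_mat_index_sum[OF Wop_B_carrier_mat Psi_carrier_mat r]) simp
  also have "\<dots> = (\<Sum>q<p * p. \<Sum>e'<p * p. ?G $$ ((a * p + b) * (p * p) + e, q * (p * p) + e') * Psi p P $$ (q * (p * p) + e', 0))"
    by (rule sum_lessThan_mult)
  also have "\<dots> = (\<Sum>a'<p. \<Sum>b'<p. \<Sum>e'<p * p. ?G $$ ((a * p + b) * (p * p) + e, (a' * p + b') * (p * p) + e') * Psi p P $$ ((a' * p + b') * (p * p) + e', 0))"
    by (rule sum_lessThan_mult)
  also have "\<dots> = (\<Sum>a'<p. \<Sum>b'<p. \<Sum>e'<p * p. (if a = a' then 1 else 0) * Wop p x z $$ (b, b') * (if e = e' then 1 else 0) * Psi p P $$ ((a' * p + b') * (p * p) + e', 0))"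
    using a b e by (intro sum.cong refl) (simp add: index_Wop_B)
  also have "\<dots> = (\<Sum>b1<p. Wop p x z $$ (b, b1) * Psi p P $$ ((a * p + b1) * (p * p) + e, 0))"
    using a b e by (simp add: mult_delta_left mult_delta_right sum_if_const sum.delta sum.delta')
  finally show ?thesis .
qed

lemma index_omega_ABE:
  assumes r: "r < p * p * (p * p)" and r': "r' < p * p * (p * p)"
  shows "omega_ABE p P Pt $$ (r, r') = (\<Sum>x<p. \<Sum>z<p. complex_of_real (Pt ((p - x) mod p) z) *
     ((Wop_B p x z * Psi p P) $$ (r, 0) *
      cnj ((Wop_B p x z * Psi p P) $$ (r', 0))))"
proof -
  have GP: "Wop_B p x z * Psi p P \<in> carrier_mat (p * p * (p * p)) 1" for x z
    by (rule mult_carrier_mat[OF Wop_B_carrier_mat Psi_carrier_mat])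
  have C: "(Wop_B p x z * Psi p P) * adj (Wop_B p x z * Psi p P)
      \<in> carrier_mat (p * p * (p * p)) (p * p * (p * p))" for x z
    by (rule mult_carrier_mat[OF GP adj_carrier_mat[OF GP]])
  have "omega_ABE p P Pt $$ (r, r') = (\<Sum>(x, z)\<in>{..<p} \<times> {..<p}. complex_of_real (Pt ((p - x) mod p) z) *
     ((Wop_B p x z * Psi p P) * adj (Wop_B p x z * Psi p P)) $$ (r, r'))"
    unfolding omega_ABE_def pauli_B_def using r r'
    by (subst index_msum) (auto intro!: sum.cong simp: case_prod_beta index_smult_mat_carrier[OF C] conj_rank_one[OF Wop_B_carrier_mat Psi_carrier_mat])
  also have "\<dots> = (\<Sum>(x, z)\<in>{..<p} \<times> {..<p}. complex_of_real (Pt ((p - x) mod p) z) *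
     ((Wop_B p x z * Psi p P) $$ (r, 0) *
      cnj ((Wop_B p x z * Psi p P) $$ (r', 0))))"
  proof (intro sum.cong refl, clarify)
    fix x z
    show "complex_of_real (Pt ((p - x) mod p) z) *
     ((Wop_B p x z * Psi p P) * adj (Wop_B p x z * Psi p P)) $$ (r, r')
      = complex_of_real (Pt ((p - x) mod p) z) *
     ((Wop_B p x z * Psi p P) $$ (r, 0) *
      cnj ((Wop_B p x z * Psi p P) $$ (r', 0)))"
      by (subst index_mult_adj[OF GP GP r r']) simp
  qed
  finally show ?thesis by (simp add: sum.cartesian_product[symmetric])
qed

lemma index_Wop_B_Psi_eq:
  assumes a: "a < p" and b: "b < p" and x: "x < p" and x0: "x0 < p" and z0: "z0 < p"
  shows "(Wop_B p x z * Psi p P) $$ ((a * p + b) * (p * p) + (x0 * p + z0), 0)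
       = (complex_of_real (sqrt (P x0 z0)) * complex_of_real (1 / sqrt (real p))) *
         (cnj (omega p ^ ((z + z0) * x)) * Wop p ((x0 + p - x) mod p) ((z + z0) mod p) $$ (a, b))"
proof -
  let ?s = "complex_of_real (sqrt (P x0 z0)) * complex_of_real (1 / sqrt (real p))"
  have "(Wop_B p x z * Psi p P) $$ ((a * p + b) * (p * p) + (x0 * p + z0), 0)
      = (\<Sum>b1<p. Wop p x z $$ (b, b1) * Psi p P $$ ((a * p + b1) * (p * p) + (x0 * p + z0), 0))"
    by (rule index_Wop_B_Psi[OF a b index_less_mult[OF x0 z0]])
  also have "\<dots> = (\<Sum>b1<p. ?s * (Wop p x z $$ (b, b1) * Wop p x0 z0 $$ (a, b1)))"
    using a x0 z0 by (intro sum.cong refl) (simp add: index_Psi)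
  also have "\<dots> = ?s * (\<Sum>b1<p. Wop p x z $$ (b, b1) * Wop p x0 z0 $$ (a, b1))"
    by (simp add: sum_distrib_left)
  also have "(\<Sum>b1<p. Wop p x z $$ (b, b1) * Wop p x0 z0 $$ (a, b1)) =
      cnj (omega p ^ ((z + z0) * x)) * Wop p ((x0 + p - x) mod p) ((z + z0) mod p) $$ (a, b)"
    by (rule Wop_mult_transpose_index[OF a b x x0])
  finally show ?thesis .
qed

lemma index_omega_AB:
  assumes P0: "\<forall>x<p. \<forall>z<p. 0 \<le> P x z"
    and a: "a < p" and b: "b < p" and a': "a' < p" and b': "b' < p"
  shows "ptrace_second (p * p) (p * p) (omega_ABE p P Pt) $$ (a * p + b, a' * p + b')
     = (\<Sum>x0<p. \<Sum>z0<p. \<Sum>x<p. \<Sum>z<p. complex_of_real (Pt ((p - x) mod p) z * P x0 z0 / real p) *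
         (Wop p ((x0 + p - x) mod p) ((z + z0) mod p) $$ (a, b) * cnj (Wop p ((x0 + p - x) mod p) ((z + z0) mod p) $$ (a', b'))))"
proof -
  have i: "a * p + b < p * p" and j: "a' * p + b' < p * p" using index_less_mult a b a' b' by auto
  have "ptrace_second (p * p) (p * p) (omega_ABE p P Pt) $$ (a * p + b, a' * p + b')
      = (\<Sum>k<p * p. omega_ABE p P Pt $$ ((a * p + b) * (p * p) + k, (a' * p + b') * (p * p) + k))"
    using i j by (simp add: ptrace_second_def)
  also have "\<dots> = (\<Sum>x0<p. \<Sum>z0<p. omega_ABE p P Pt $$ ((a * p + b) * (p * p) + (x0 * p + z0), (a' * p + b') * (p * p) + (x0 * p + z0)))"
    by (rule sum_lessThan_mult)
  also have "\<dots> = (\<Sum>x0<p. \<Sum>z0<p. \<Sum>x<p. \<Sum>z<p. complex_of_real (Pt ((p - x) mod p) z * P x0 z0 / real p) *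
         (Wop p ((x0 + p - x) mod p) ((z + z0) mod p) $$ (a, b) * cnj (Wop p ((x0 + p - x) mod p) ((z + z0) mod p) $$ (a', b'))))"
  proof (intro sum.cong refl)
    fix x0 z0 x z assume x0: "x0 \<in> {..<p}" and z0: "z0 \<in> {..<p}" and x: "x \<in> {..<p}" and z: "z \<in> {..<p}"
    then have x0': "x0 < p" and z0': "z0 < p" and x': "x < p" and z': "z < p" by auto
    have r: "(a * p + b) * (p * p) + (x0 * p + z0) < p * p * (p * p)" using index_less_mult[OF i index_less_mult[OF x0' z0']] .
    have r': "(a' * p + b') * (p * p) + (x0 * p + z0) < p * p * (p * p)" using index_less_mult[OF j index_less_mult[OF x0' z0']] .
    show "omega_ABE p P Pt $$ ((a * p + b) * (p * p) + (x0 * p + z0), (a' * p + b') * (p * p) + (x0 * p + z0)) = 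
      (\<Sum>x<p. \<Sum>z<p. complex_of_real (Pt ((p - x) mod p) z * P x0 z0 / real p) *
         (Wop p ((x0 + p - x) mod p) ((z + z0) mod p) $$ (a, b) * cnj (Wop p ((x0 + p - x) mod p) ((z + z0) mod p) $$ (a', b'))))"
      unfolding index_omega_ABE[OF r r']
    proof (intro sum.cong refl)
      fix x z assume "x \<in> {..<p}" "z \<in> {..<p}"
      then have xx: "x < p" by auto
      let ?s = "complex_of_real (sqrt (P x0 z0)) * complex_of_real (1 / sqrt (real p))"
      let ?\<zeta> = "omega p ^ ((z + z0) * x)"
      let ?W = "Wop p ((x0 + p - x) mod p) ((z + z0) mod p) $$ (a, b)"
      let ?W' = "Wop p ((x0 + p - x) mod p) ((z + z0) mod p) $$ (a', b')"
      have ss: "?s * cnj ?s = complex_of_real (P x0 z0 / real p)"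
      proof -
        have "?s * cnj ?s = (complex_of_real (sqrt (P x0 z0)) * cnj (complex_of_real (sqrt (P x0 z0)))) *
               (complex_of_real (1 / sqrt (real p)) * cnj (complex_of_real (1 / sqrt (real p))))"
          by (simp only: complex_cnj_mult mult_ac)
        also have "\<dots> = complex_of_real (P x0 z0) * complex_of_real (1 / real p)"
        proof -
          have e1: "sqrt (P x0 z0) * sqrt (P x0 z0) = P x0 z0" using P0 x0' z0' by simp
          have e2: "(1 / sqrt (real p)) * (1 / sqrt (real p)) = 1 / real p" by simp
          show ?thesis by (simp only: complex_cnj_complex_of_real of_real_mult[symmetric] e1 e2)
        qed
        finally show ?thesis by simp
      qed
      have "complex_of_real (Pt ((p - x) mod p) z) *
         ((Wop_B p x z * Psi p P) $$ ((a * p + b) * (p * p) + (x0 * p + z0), 0) *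
          cnj ((Wop_B p x z * Psi p P) $$ ((a' * p + b') * (p * p) + (x0 * p + z0), 0)))
        = complex_of_real (Pt ((p - x) mod p) z) * ((?s * (cnj ?\<zeta> * ?W)) * cnj (?s * (cnj ?\<zeta> * ?W')))"
        by (simp only: index_Wop_B_Psi_eq[OF a b xx x0' z0'] index_Wop_B_Psi_eq[OF a' b' xx x0' z0'])
      also have "\<dots> = complex_of_real (Pt ((p - x) mod p) z) * (?s * cnj ?s) * (cnj ?\<zeta> * cnj (cnj ?\<zeta>)) * (?W * cnj ?W')"
        by (simp only: complex_cnj_mult mult_ac)
      also have "cnj ?\<zeta> * cnj (cnj ?\<zeta>) = 1" using cnj_omega_power_mult by (simp only: complex_cnj_cnj)
      also note ss
      finally show "complex_of_real (Pt ((p - x) mod p) z) *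
         ((Wop_B p x z * Psi p P) $$ ((a * p + b) * (p * p) + (x0 * p + z0), 0) *
          cnj ((Wop_B p x z * Psi p P) $$ ((a' * p + b') * (p * p) + (x0 * p + z0), 0)))
        = complex_of_real (Pt ((p - x) mod p) z * P x0 z0 / real p) * (?W * cnj ?W')"
        by simp
    qed
  qed
  finally show ?thesis .
qed

lemma sum_translate_pair:
  assumes x: "x < p" and z: "z < p"
  shows "(\<Sum>x0<p. \<Sum>z0<p. g x0 z0 * F ((x0 + p - x) mod p) ((z + z0) mod p))
       = (\<Sum>\<alpha><p. \<Sum>\<beta><p. g ((\<alpha> + x) mod p) ((\<beta> + (p - z)) mod p) * F \<alpha> \<beta>)"
proof -
  have shift_x: "((\<alpha> + x) mod p + p - x) mod p = \<alpha>" if "\<alpha> < p" for \<alpha>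
  proof -
    have "((\<alpha> + x) mod p + p - x) mod p = ((\<alpha> + x) mod p + (p - x)) mod p" using x by simp
    also have "\<dots> = (\<alpha> + x + (p - x)) mod p" by (simp add: mod_add_left_eq)
    also have "\<alpha> + x + (p - x) = \<alpha> + p" using x by simp
    finally show ?thesis using that by simp
  qed
  have shift_z: "(z + (\<beta> + (p - z)) mod p) mod p = \<beta>" if "\<beta> < p" for \<beta>
  proof -
    have "(z + (\<beta> + (p - z)) mod p) mod p = (z + (\<beta> + (p - z))) mod p" by (simp add: mod_add_right_eq)
    also have "z + (\<beta> + (p - z)) = \<beta> + p" using z by simp
    finally show ?thesis using that by simp
  qed
  have "(\<Sum>x0<p. \<Sum>z0<p. g x0 z0 * F ((x0 + p - x) mod p) ((z + z0) mod p))
      = (\<Sum>\<alpha><p. \<Sum>\<beta><p. g ((\<alpha> + x) mod p) ((\<beta> + (p - z)) mod p)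
           * F (((\<alpha> + x) mod p + p - x) mod p) ((z + (\<beta> + (p - z)) mod p) mod p))"
    by (subst sum_mod_shift[where c = x, symmetric], rule p_pos, rule sum.cong[OF refl],
        rule sum_mod_shift[where c = "p - z", symmetric], rule p_pos)
  also have "\<dots> = (\<Sum>\<alpha><p. \<Sum>\<beta><p. g ((\<alpha> + x) mod p) ((\<beta> + (p - z)) mod p) * F \<alpha> \<beta>)"
    by (intro sum.cong refl) (simp add: shift_x shift_z)
  finally show ?thesis .
qed

lemma conv_reindex:
  assumes "\<alpha> < p" "\<beta> < p"
  shows "(\<Sum>x<p. \<Sum>z<p. Pt ((p - x) mod p) z * P ((\<alpha> + x) mod p) ((\<beta> + (p - z)) mod p)) = conv p Pt P \<alpha> \<beta>"
proof -
  define g where "g u = (\<Sum>z<p. Pt u z * P ((\<alpha> + p - u) mod p) ((\<beta> + p - z) mod p))" for u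
  have "(\<alpha> + p - (p - x) mod p) mod p = (\<alpha> + x) mod p" if "x < p" for x
    using that assms by (cases "x = 0") auto
  then have "(\<Sum>x<p. \<Sum>z<p. Pt ((p - x) mod p) z * P ((\<alpha> + x) mod p) ((\<beta> + (p - z)) mod p)) = (\<Sum>x<p. g ((p - x) mod p))"
    by (intro sum.cong refl) (auto simp: g_def)
  also have "\<dots> = (\<Sum>u<p. g u)" by (rule sum_mod_neg[OF p_pos])
  finally show ?thesis by (simp add: g_def conv_def)
qed

lemma bell_vec_outer:
  assumes "a < p" "b < p" "a' < p" "b' < p"
  shows "bell_vec p (\<alpha>, \<beta>) (a * p + b) * cnj (bell_vec p (\<alpha>, \<beta>) (a' * p + b'))
       = complex_of_real (1 / real p) * (Wop p \<alpha> \<beta> $$ (a, b) * cnj (Wop p \<alpha> \<beta> $$ (a', b')))"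
proof -
  have "complex_of_real (1 / sqrt (real p)) * cnj (complex_of_real (1 / sqrt (real p))) = complex_of_real (1 / real p)"
    by (simp flip: of_real_mult)
  then show ?thesis using assms by (simp add: bell_vec_def mult_ac)
qed

lemma index_decompose: "i < p * p \<Longrightarrow> i = (i div p) * p + i mod p \<and> i div p < p \<and> i mod p < p"
  using p_gt_1 by (auto simp: less_mult_imp_div_less)

lemma omega_AB_eq:
  assumes P0: "\<forall>x<p. \<forall>z<p. 0 \<le> P x z"
  shows "ptrace_second (p * p) (p * p) (omega_ABE p P Pt)
       = spectral_sum (p * p) ({..<p} \<times> {..<p}) (\<lambda>k. complex_of_real (case_prod (conv p Pt P) k)) (bell_vec p)"
proof (rule eq_matI)
  fix i j assume "i < dim_row (spectral_sum (p * p) ({..<p} \<times> {..<p}) (\<lambda>k. complex_of_real (case_prod (conv p Pt P) k)) (bell_vec p))"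
    "j < dim_col (spectral_sum (p * p) ({..<p} \<times> {..<p}) (\<lambda>k. complex_of_real (case_prod (conv p Pt P) k)) (bell_vec p))"
  then have i: "i < p * p" and j: "j < p * p" by auto
  define a b a' b' where "a = i div p" "b = i mod p" "a' = j div p" "b' = j mod p"
  have ia: "i = a * p + b" "a < p" "b < p" using index_decompose[OF i] by (auto simp: a_b_a'_b'_def)
  have ja: "j = a' * p + b'" "a' < p" "b' < p" using index_decompose[OF j] by (auto simp: a_b_a'_b'_def)
  define F where "F \<alpha> \<beta> = Wop p \<alpha> \<beta> $$ (a, b) * cnj (Wop p \<alpha> \<beta> $$ (a', b'))" for \<alpha> \<beta>
  have "ptrace_second (p * p) (p * p) (omega_ABE p P Pt) $$ (i, j)
      = (\<Sum>x<p. \<Sum>z<p. \<Sum>x0<p. \<Sum>z0<p. complex_of_real (Pt ((p - x) mod p) z * P x0 z0 / real p) *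
         F ((x0 + p - x) mod p) ((z + z0) mod p))"
    unfolding ia ja F_def by (subst sum_swap_12_34) (rule index_omega_AB[OF P0 ia(2,3) ja(2,3)])
  also have "\<dots> = (\<Sum>x<p. \<Sum>z<p. \<Sum>\<alpha><p. \<Sum>\<beta><p.
      complex_of_real (Pt ((p - x) mod p) z * P ((\<alpha> + x) mod p) ((\<beta> + (p - z)) mod p) / real p) * F \<alpha> \<beta>)"
    by (intro sum.cong refl sum_translate_pair) simp_all
  also have "\<dots> = (\<Sum>\<alpha><p. \<Sum>\<beta><p. complex_of_real (conv p Pt P \<alpha> \<beta> / real p) * F \<alpha> \<beta>)"
  proof (subst sum_swap_12_34, intro sum.cong refl)
    fix \<alpha> \<beta> assume "\<alpha> \<in> {..<p}" "\<beta> \<in> {..<p}"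
    then have conv: "(\<Sum>x<p. \<Sum>z<p. Pt ((p - x) mod p) z * P ((\<alpha> + x) mod p) ((\<beta> + (p - z)) mod p)) = conv p Pt P \<alpha> \<beta>"
      by (intro conv_reindex) auto
    have "(\<Sum>x<p. \<Sum>z<p. complex_of_real (Pt ((p - x) mod p) z * P ((\<alpha> + x) mod p) ((\<beta> + (p - z)) mod p) / real p) * F \<alpha> \<beta>)
        = complex_of_real ((\<Sum>x<p. \<Sum>z<p. Pt ((p - x) mod p) z * P ((\<alpha> + x) mod p) ((\<beta> + (p - z)) mod p)) / real p) * F \<alpha> \<beta>"
      by (simp add: sum_distrib_right sum_divide_distrib)
    then show "(\<Sum>x<p. \<Sum>z<p. complex_of_real (Pt ((p - x) mod p) z * P ((\<alpha> + x) mod p) ((\<beta> + (p - z)) mod p) / real p) * F \<alpha> \<beta>)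
        = complex_of_real (conv p Pt P \<alpha> \<beta> / real p) * F \<alpha> \<beta>"
      by (simp only: conv)
  qed
  also have "\<dots> = spectral_sum (p * p) ({..<p} \<times> {..<p}) (\<lambda>k. complex_of_real (case_prod (conv p Pt P) k)) (bell_vec p) $$ (i, j)"
  proof -
    have "spectral_sum (p * p) ({..<p} \<times> {..<p}) (\<lambda>k. complex_of_real (case_prod (conv p Pt P) k)) (bell_vec p) $$ (i, j)
        = (\<Sum>\<alpha><p. \<Sum>\<beta><p. complex_of_real (conv p Pt P \<alpha> \<beta>) * (bell_vec p (\<alpha>, \<beta>) i * cnj (bell_vec p (\<alpha>, \<beta>) j)))"
      using i j by (simp add: index_spectral_sum case_prod_beta sum.cartesian_product mult.assoc)
    then show ?thesis unfolding ia ja by (simp add: bell_vec_outer ia ja F_def)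
  qed
  finally show "ptrace_second (p * p) (p * p) (omega_ABE p P Pt) $$ (i, j)
      = spectral_sum (p * p) ({..<p} \<times> {..<p}) (\<lambda>k. complex_of_real (case_prod (conv p Pt P) k)) (bell_vec p) $$ (i, j)" .
qed (auto simp: ptrace_second_def)

lemma orthonormal_family_bell_vec: "orthonormal_family (p * p) ({..<p} \<times> {..<p}) (bell_vec p)"
  unfolding orthonormal_family_def
proof (intro ballI)
  fix k k' assume k: "k \<in> {..<p} \<times> {..<p}" and k': "k' \<in> {..<p} \<times> {..<p}"
  obtain \<alpha> \<beta> where kk: "k = (\<alpha>, \<beta>)" by (cases k)
  obtain \<alpha>' \<beta>' where kk': "k' = (\<alpha>', \<beta>')" by (cases k')
  have a: "\<alpha> \<in> {..<p}" "\<beta> \<in> {..<p}" "\<alpha>' \<in> {..<p}" "\<beta>' \<in> {..<p}" using k k' kk kk' by auto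
  have c2: "cnj (complex_of_real (1 / sqrt (real p))) * complex_of_real (1 / sqrt (real p)) = complex_of_real (1 / real p)"
    by (simp flip: of_real_mult)
  have "(\<Sum>i<p * p. cnj (bell_vec p (\<alpha>, \<beta>) i) * bell_vec p (\<alpha>', \<beta>') i)
      = (\<Sum>u<p. \<Sum>v<p. cnj (bell_vec p (\<alpha>, \<beta>) (u * p + v)) * bell_vec p (\<alpha>', \<beta>') (u * p + v))"
    by (rule sum_lessThan_mult)
  also have "\<dots> = (\<Sum>u<p. \<Sum>v<p. complex_of_real (1 / real p) * (Wop p \<alpha>' \<beta>' $$ (u, v) * cnj (Wop p \<alpha> \<beta> $$ (u, v))))"
  proof (intro sum.cong refl)
    fix u v assume "u \<in> {..<p}" "v \<in> {..<p}"
    then have v: "v < p" by auto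
    have dm: "(u * p + v) div p = u" "(u * p + v) mod p = v" using v by auto
    show "cnj (bell_vec p (\<alpha>, \<beta>) (u * p + v)) * bell_vec p (\<alpha>', \<beta>') (u * p + v) =
        complex_of_real (1 / real p) * (Wop p \<alpha>' \<beta>' $$ (u, v) * cnj (Wop p \<alpha> \<beta> $$ (u, v)))"
      unfolding bell_vec_def case_prod_conv dm c2[symmetric] by (simp only: complex_cnj_mult mult_ac)
  qed
  also have "\<dots> = complex_of_real (1 / real p) * (\<Sum>u<p. \<Sum>v<p. Wop p \<alpha>' \<beta>' $$ (u, v) * cnj (Wop p \<alpha> \<beta> $$ (u, v)))"
    by (simp add: sum_distrib_left)
  also have "\<dots> = complex_of_real (1 / real p) * (if \<alpha>' = \<alpha> \<and> \<beta>' = \<beta> then of_nat p else 0)"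
    using a by (subst Wop_hs_orthogonal) auto
  also have "\<dots> = (if (\<alpha>, \<beta>) = (\<alpha>', \<beta>') then 1 else 0)" using p_pos by auto
  finally show "(\<Sum>i<p * p. cnj (bell_vec p k i) * bell_vec p k' i) = (if k = k' then 1 else 0)" unfolding kk kk' .
qed

lemma conv_sum:
  assumes P: "prob_dist p P" and Pt: "prob_dist p Pt"
  shows "(\<Sum>\<alpha><p. \<Sum>\<beta><p. conv p Pt P \<alpha> \<beta>) = 1"
proof -
  have "(\<Sum>\<alpha><p. \<Sum>\<beta><p. conv p Pt P \<alpha> \<beta>)
      = (\<Sum>\<alpha><p. \<Sum>\<beta><p. \<Sum>x<p. \<Sum>z<p. Pt x z * P ((\<alpha> + p - x) mod p) ((\<beta> + p - z) mod p))"
    by (simp add: conv_def)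
  also have "\<dots> = (\<Sum>x<p. \<Sum>z<p. \<Sum>\<alpha><p. \<Sum>\<beta><p. Pt x z * P ((\<alpha> + p - x) mod p) ((\<beta> + p - z) mod p))"
    by (rule sum_swap_12_34)
  also have "\<dots> = (\<Sum>x<p. \<Sum>z<p. Pt x z * (\<Sum>\<alpha><p. \<Sum>\<beta><p. P \<alpha> \<beta>))"
  proof (rule sum.cong[OF refl], rule sum.cong[OF refl])
    fix x z assume "x \<in> {..<p}" "z \<in> {..<p}"
    then have x: "x < p" and z: "z < p" by auto
    have "(\<Sum>\<alpha><p. \<Sum>\<beta><p. Pt x z * P ((\<alpha> + p - x) mod p) ((\<beta> + p - z) mod p))
        = Pt x z * (\<Sum>\<alpha><p. \<Sum>\<beta><p. P ((\<alpha> + (p - x)) mod p) ((\<beta> + (p - z)) mod p))"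
      using x z by (simp add: sum_distrib_left)
    also have "(\<Sum>\<alpha><p. \<Sum>\<beta><p. P ((\<alpha> + (p - x)) mod p) ((\<beta> + (p - z)) mod p)) = (\<Sum>\<alpha><p. \<Sum>\<beta><p. P ((\<alpha> + (p - x)) mod p) \<beta>)"
      by (rule sum.cong[OF refl], rule sum_mod_shift) (use p_pos in simp)
    also have "\<dots> = (\<Sum>\<alpha><p. \<Sum>\<beta><p. P \<alpha> \<beta>)"
      by (rule sum_mod_shift[where g="\<lambda>\<alpha>. \<Sum>\<beta><p. P \<alpha> \<beta>"]) (use p_pos in simp)
    finally show "(\<Sum>\<alpha><p. \<Sum>\<beta><p. Pt x z * P ((\<alpha> + p - x) mod p) ((\<beta> + p - z) mod p)) = Pt x z * (\<Sum>\<alpha><p. \<Sum>\<beta><p. P \<alpha> \<beta>)" .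
  qed
  also have "\<dots> = 1" using P Pt by (simp add: prob_dist_def sum_distrib_right[symmetric])
  finally show ?thesis .
qed

lemma omega_B_eq:
  assumes P: "prob_dist p P" and Pt: "prob_dist p Pt"
  shows "ptrace_first p p (spectral_sum (p * p) ({..<p} \<times> {..<p}) (\<lambda>k. complex_of_real (case_prod (conv p Pt P) k)) (bell_vec p))
       = rdiag p (\<lambda>_. 1 / real p)"
proof (rule eq_matI)
  fix j j' assume "j < dim_row (rdiag p (\<lambda>_. 1 / real p))"
    "j' < dim_col (rdiag p (\<lambda>_. 1 / real p))"
  then have j: "j < p" and j': "j' < p" by auto
  let ?c = "complex_of_real (1 / sqrt (real p))"
  have c2: "?c * cnj ?c = complex_of_real (1 / real p)" by (simp flip: of_real_mult)
  have "ptrace_first p p (spectral_sum (p * p) ({..<p} \<times> {..<p}) (\<lambda>k. complex_of_real (case_prod (conv p Pt P) k)) (bell_vec p)) $$ (j, j')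
      = (\<Sum>k<p. \<Sum>(\<alpha>, \<beta>)\<in>{..<p} \<times> {..<p}. complex_of_real (conv p Pt P \<alpha> \<beta>) * bell_vec p (\<alpha>, \<beta>) (k * p + j) * cnj (bell_vec p (\<alpha>, \<beta>) (k * p + j')))"
    using j j' by (simp add: ptrace_first_def index_spectral_sum index_less_mult case_prod_beta)
  also have "\<dots> = (\<Sum>k<p. \<Sum>\<alpha><p. \<Sum>\<beta><p. (complex_of_real (conv p Pt P \<alpha> \<beta>) * complex_of_real (1 / real p)) * (Wop p \<alpha> \<beta> $$ (k, j) * cnj (Wop p \<alpha> \<beta> $$ (k, j'))))"
  proof (rule sum.cong[OF refl])
    fix k assume "k \<in> {..<p}"
    have dm: "(k * p + j) div p = k" "(k * p + j) mod p = j" "(k * p + j') div p = k" "(k * p + j') mod p = j'" using j j' by auto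
    show "(\<Sum>(\<alpha>, \<beta>)\<in>{..<p} \<times> {..<p}. complex_of_real (conv p Pt P \<alpha> \<beta>) * bell_vec p (\<alpha>, \<beta>) (k * p + j) * cnj (bell_vec p (\<alpha>, \<beta>) (k * p + j')))
        = (\<Sum>\<alpha><p. \<Sum>\<beta><p. (complex_of_real (conv p Pt P \<alpha> \<beta>) * complex_of_real (1 / real p)) * (Wop p \<alpha> \<beta> $$ (k, j) * cnj (Wop p \<alpha> \<beta> $$ (k, j'))))"
      unfolding sum.cartesian_product[symmetric] bell_vec_def case_prod_conv dm c2[symmetric]
      by (simp only: complex_cnj_mult mult_ac)
  qed
  also have "\<dots> = (\<Sum>\<alpha><p. \<Sum>\<beta><p. (complex_of_real (conv p Pt P \<alpha> \<beta>) * complex_of_real (1 / real p)) * (\<Sum>k<p. Wop p \<alpha> \<beta> $$ (k, j) * cnj (Wop p \<alpha> \<beta> $$ (k, j'))))"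
    by (rule trans[OF sum_swap_1_23]) (simp only: sum_distrib_left)
  also have "\<dots> = (\<Sum>\<alpha><p. \<Sum>\<beta><p. (complex_of_real (conv p Pt P \<alpha> \<beta>) * complex_of_real (1 / real p)) * (if j = j' then 1 else 0))"
    using j j' by (intro sum.cong refl) (simp add: Wop_columns_orthonormal)
  also have "\<dots> = complex_of_real ((\<Sum>\<alpha><p. \<Sum>\<beta><p. conv p Pt P \<alpha> \<beta>) * (1 / real p)) * (if j = j' then 1 else 0)"
    by (simp add: sum_distrib_right sum_divide_distrib)
  also have "\<dots> = (if j = j' then complex_of_real (1 / real p) else 0)" using conv_sum[OF P Pt] by simp
  also have "\<dots> = rdiag p (\<lambda>_. 1 / real p) $$ (j, j')"
    using j j' by (simp add: index_rdiag)
  finally show "ptrace_first p p (spectral_sum (p * p) ({..<p} \<times> {..<p}) (\<lambda>k. complex_of_real (case_prod (conv p Pt P) k)) (bell_vec p)) $$ (j, j')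
      = rdiag p (\<lambda>_. 1 / real p) $$ (j, j')" .
qed (auto simp: ptrace_first_def)

lemma sum_reflected_prob_dist:
  assumes Pt: "prob_dist p Pt"
  shows "(\<Sum>x<p. \<Sum>z<p. Pt ((p - x) mod p) z) = 1"
proof -
  have "(\<Sum>x<p. \<Sum>z<p. Pt ((p - x) mod p) z) = (\<Sum>x<p. \<Sum>z<p. Pt x z)"
    by (rule sum_mod_neg[where g="\<lambda>u. \<Sum>z<p. Pt u z"]) (use p_pos in simp)
  then show ?thesis using Pt by (simp add: prob_dist_def)
qed

lemma omega_AE_eq:
  assumes P0: "\<forall>x<p. \<forall>z<p. 0 \<le> P x z" and Pt: "prob_dist p Pt"
  shows "ptrace_mid p p (p * p) (omega_ABE p P Pt) = spectral_sum (p * (p * p)) {..<p} (\<lambda>_. complex_of_real (1 / real p)) (psi_slice p P)"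
proof (rule eq_matI)
  fix i j assume "i < dim_row (spectral_sum (p * (p * p)) {..<p} (\<lambda>_. complex_of_real (1 / real p)) (psi_slice p P))"
    "j < dim_col (spectral_sum (p * (p * p)) {..<p} (\<lambda>_. complex_of_real (1 / real p)) (psi_slice p P))"
  then have i: "i < p * (p * p)" and j: "j < p * (p * p)" by auto
  define a e a' e' where "a = i div (p * p)" "e = i mod (p * p)" "a' = j div (p * p)" "e' = j mod (p * p)"
  have ae: "a < p" "e < p * p" "a' < p" "e' < p * p" using i j p_pos
    by (auto simp: a_e_a'_e'_def less_mult_imp_div_less mult.commute)
  define x0 z0 x0' z0' where "x0 = e div p" "z0 = e mod p" "x0' = e' div p" "z0' = e' mod p"
  have xz: "e = x0 * p + z0" "x0 < p" "z0 < p" "e' = x0' * p + z0'" "x0' < p" "z0' < p"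
    using index_decompose[OF ae(2)] index_decompose[OF ae(4)] by (auto simp: x0_z0_x0'_z0'_def)
  let ?c = "complex_of_real (1 / sqrt (real p))"
  have c2: "?c * cnj ?c = complex_of_real (1 / real p)" by (simp flip: of_real_mult)
  define \<Psi>1 where "\<Psi>1 b1 = Psi p P $$ ((a * p + b1) * (p * p) + e, 0)" for b1
  define \<Psi>2 where "\<Psi>2 b1 = Psi p P $$ ((a' * p + b1) * (p * p) + e', 0)" for b1
  have idx: "(i div (p * p)) * (p * (p * p)) + k * (p * p) + i mod (p * p) = (a * p + k) * (p * p) + e"
    "(j div (p * p)) * (p * (p * p)) + k * (p * p) + j mod (p * p) = (a' * p + k) * (p * p) + e'" for k
    by (simp_all add: a_e_a'_e'_def algebra_simps)
  have "ptrace_mid p p (p * p) (omega_ABE p P Pt) $$ (i, j)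
      = (\<Sum>k<p. omega_ABE p P Pt $$ ((a * p + k) * (p * p) + e, (a' * p + k) * (p * p) + e'))"
    using i j by (simp add: ptrace_mid_def idx)
  also have "\<dots> = (\<Sum>k<p. \<Sum>x<p. \<Sum>z<p. complex_of_real (Pt ((p - x) mod p) z) *
       ((\<Sum>b1<p. Wop p x z $$ (k, b1) * \<Psi>1 b1) * cnj (\<Sum>b2<p. Wop p x z $$ (k, b2) * \<Psi>2 b2)))"
  proof (rule sum.cong[OF refl])
    fix k assume "k \<in> {..<p}"
    then have k: "k < p" by simp
    have r: "(a * p + k) * (p * p) + e < p * p * (p * p)" using index_less_mult[OF index_less_mult[OF ae(1) k] ae(2)] .
    have r': "(a' * p + k) * (p * p) + e' < p * p * (p * p)" using index_less_mult[OF index_less_mult[OF ae(3) k] ae(4)] .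
    show "omega_ABE p P Pt $$ ((a * p + k) * (p * p) + e, (a' * p + k) * (p * p) + e') = (\<Sum>x<p. \<Sum>z<p. complex_of_real (Pt ((p - x) mod p) z) *
       ((\<Sum>b1<p. Wop p x z $$ (k, b1) * \<Psi>1 b1) * cnj (\<Sum>b2<p. Wop p x z $$ (k, b2) * \<Psi>2 b2)))"
      unfolding index_omega_ABE[OF r r'] \<Psi>1_def \<Psi>2_def
      by (simp only: index_Wop_B_Psi[OF ae(1) k ae(2)] index_Wop_B_Psi[OF ae(3) k ae(4)])
  qed
  also have "\<dots> = (\<Sum>x<p. \<Sum>z<p. complex_of_real (Pt ((p - x) mod p) z) *
       (\<Sum>k<p. (\<Sum>b1<p. Wop p x z $$ (k, b1) * \<Psi>1 b1) * cnj (\<Sum>b2<p. Wop p x z $$ (k, b2) * \<Psi>2 b2)))"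
    by (rule trans[OF sum_swap_1_23]) (simp only: sum_distrib_left)
  also have "\<dots> = (\<Sum>x<p. \<Sum>z<p. complex_of_real (Pt ((p - x) mod p) z) * (\<Sum>b<p. \<Psi>1 b * cnj (\<Psi>2 b)))"
  proof (rule sum.cong[OF refl], rule sum.cong[OF refl])
    fix x z assume "x \<in> {..<p}"
    then have x: "x < p" by simp
    show "complex_of_real (Pt ((p - x) mod p) z) *
       (\<Sum>k<p. (\<Sum>b1<p. Wop p x z $$ (k, b1) * \<Psi>1 b1) * cnj (\<Sum>b2<p. Wop p x z $$ (k, b2) * \<Psi>2 b2))
      = complex_of_real (Pt ((p - x) mod p) z) * (\<Sum>b<p. \<Psi>1 b * cnj (\<Psi>2 b))"
      by (simp only: Wop_preserves_inner[OF x])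
  qed
  also have "\<dots> = complex_of_real (\<Sum>x<p. \<Sum>z<p. Pt ((p - x) mod p) z) * (\<Sum>b<p. \<Psi>1 b * cnj (\<Psi>2 b))"
    by (simp add: sum_distrib_right)
  also have "\<dots> = (\<Sum>b<p. \<Psi>1 b * cnj (\<Psi>2 b))" using sum_reflected_prob_dist[OF Pt] by simp
  also have "\<dots> = (\<Sum>k<p. complex_of_real (1 / real p) * psi_slice p P k i * cnj (psi_slice p P k j))"
  proof (rule sum.cong[OF refl])
    fix k assume "k \<in> {..<p}"
    then have k: "k < p" by simp
    have ai: "i div (p * p) = a" "i mod (p * p) div p = x0" "i mod p = z0"
      "j div (p * p) = a'" "j mod (p * p) div p = x0'" "j mod p = z0'"
      using xz by (simp_all add: a_e_a'_e'_def x0_z0_x0'_z0'_def mod_mult2_eq' mod_mod_cancel)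
    show "\<Psi>1 k * cnj (\<Psi>2 k) = complex_of_real (1 / real p) * psi_slice p P k i * cnj (psi_slice p P k j)"
      unfolding \<Psi>1_def \<Psi>2_def psi_slice_def ai xz(1,4) index_Psi[OF ae(1) k xz(2,3)] index_Psi[OF ae(3) k xz(5,6)]
        c2[symmetric]
      by (simp only: complex_cnj_mult mult_ac)
  qed
  also have "\<dots> = spectral_sum (p * (p * p)) {..<p} (\<lambda>_. complex_of_real (1 / real p)) (psi_slice p P) $$ (i, j)"
    using i j by (simp add: index_spectral_sum)
  finally show "ptrace_mid p p (p * p) (omega_ABE p P Pt) $$ (i, j) = spectral_sum (p * (p * p)) {..<p} (\<lambda>_. complex_of_real (1 / real p)) (psi_slice p P) $$ (i, j)" .
qed (auto simp: ptrace_mid_def)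

lemma index_psi_slice:
  assumes "x0 < p" "z0 < p"
  shows "psi_slice p P k (a * (p * p) + (x0 * p + z0)) = complex_of_real (sqrt (P x0 z0)) * Wop p x0 z0 $$ (a, k)"
proof -
  have "x0 * p + z0 < p * p" using index_less_mult assms by blast
  then show ?thesis
    using assms by (simp add: psi_slice_def mod_mult2_eq' mod_mod_cancel mult_square_add_mod_eq)
qed

lemma psi_slice_weighted_gram:
  assumes P0: "\<forall>x<p. \<forall>z<p. 0 \<le> P x z" and k: "k < p" and k': "k' < p"
  shows "(\<Sum>i<p * (p * p). complex_of_real (g (P (i mod (p * p) div p) (i mod p))) * (cnj (psi_slice p P k i) * psi_slice p P k' i))
       = complex_of_real (\<Sum>x<p. \<Sum>z<p. g (P x z) * P x z) * (if k = k' then 1 else 0)"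
proof -
  let ?G = "\<lambda>i. complex_of_real (g (P (i mod (p * p) div p) (i mod p))) * (cnj (psi_slice p P k i) * psi_slice p P k' i)"
  have "(\<Sum>i<p * (p * p). ?G i) = (\<Sum>a<p. \<Sum>x0<p. \<Sum>z0<p. ?G (a * (p * p) + (x0 * p + z0)))"
    by (subst sum_lessThan_mult) (rule sum.cong[OF refl], rule sum_lessThan_mult)
  also have "\<dots> = (\<Sum>a<p. \<Sum>x0<p. \<Sum>z0<p. complex_of_real (g (P x0 z0) * P x0 z0) * (Wop p x0 z0 $$ (a, k') * cnj (Wop p x0 z0 $$ (a, k))))"
  proof (intro sum.cong refl)
    fix a x0 z0 assume "x0 \<in> {..<p}" "z0 \<in> {..<p}"
    then have x0: "x0 < p" and z0: "z0 < p" by auto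
    have "x0 * p + z0 < p * p" using index_less_mult x0 z0 by blast
    then have ai: "(a * (p * p) + (x0 * p + z0)) mod (p * p) div p = x0" "(a * (p * p) + (x0 * p + z0)) mod p = z0"
      using x0 z0 by (simp_all add: mod_mult2_eq' mod_mod_cancel mult_square_add_mod_eq)
    have sq: "cnj (complex_of_real (sqrt (P x0 z0))) * complex_of_real (sqrt (P x0 z0)) = complex_of_real (P x0 z0)"
      using P0 x0 z0 by (simp flip: of_real_mult)
    show "complex_of_real (g (P ((a * (p * p) + (x0 * p + z0)) mod (p * p) div p) ((a * (p * p) + (x0 * p + z0)) mod p)))
          * (cnj (psi_slice p P k (a * (p * p) + (x0 * p + z0))) * psi_slice p P k' (a * (p * p) + (x0 * p + z0)))
        = complex_of_real (g (P x0 z0) * P x0 z0) * (Wop p x0 z0 $$ (a, k') * cnj (Wop p x0 z0 $$ (a, k)))"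
      unfolding ai index_psi_slice[OF x0 z0] of_real_mult sq[symmetric] by (simp only: complex_cnj_mult mult_ac)
  qed
  also have "\<dots> = (\<Sum>x0<p. \<Sum>z0<p. complex_of_real (g (P x0 z0) * P x0 z0) * (if k' = k then 1 else 0))"
    using k k' by (subst sum_swap_1_23) (simp add: sum_distrib_left[symmetric] Wop_columns_orthonormal)
  finally show ?thesis by (simp add: sum_distrib_right)
qed

lemma orthonormal_family_psi_slice:
  assumes P: "prob_dist p P"
  shows "orthonormal_family (p * (p * p)) {..<p} (psi_slice p P)"
  unfolding orthonormal_family_def
proof (intro ballI)
  fix k k' assume "k \<in> {..<p}" "k' \<in> {..<p}"
  then have "(\<Sum>i<p * (p * p). complex_of_real 1 * (cnj (psi_slice p P k i) * psi_slice p P k' i))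
      = complex_of_real (\<Sum>x<p. \<Sum>z<p. 1 * P x z) * (if k = k' then 1 else 0)"
    using P by (intro psi_slice_weighted_gram) (auto simp: prob_dist_def)
  moreover have "(\<Sum>x<p. \<Sum>z<p. 1 * P x z) = 1" using P by (simp add: prob_dist_def)
  ultimately show "(\<Sum>i<p * (p * p). cnj (psi_slice p P k i) * psi_slice p P k' i) = (if k = k' then 1 else 0)"
    by (simp only: of_real_1 mult_1_left)
qed

lemma omega_E_eq:
  assumes P0: "\<forall>x<p. \<forall>z<p. 0 \<le> P x z"
  shows "ptrace_first p (p * p) (spectral_sum (p * (p * p)) {..<p} (\<lambda>_. complex_of_real (1 / real p)) (psi_slice p P))
       = rdiag (p * p) (\<lambda>e. P (e div p) (e mod p))"
proof (rule eq_matI)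
  fix e e' assume "e < dim_row (rdiag (p * p) (\<lambda>e. P (e div p) (e mod p)))"
    "e' < dim_col (rdiag (p * p) (\<lambda>e. P (e div p) (e mod p)))"
  then have e: "e < p * p" and e': "e' < p * p" by auto
  define x0 z0 x0' z0' where "x0 = e div p" "z0 = e mod p" "x0' = e' div p" "z0' = e' mod p"
  have xz: "e = x0 * p + z0" "x0 < p" "z0 < p" "e' = x0' * p + z0'" "x0' < p" "z0' < p"
    using index_decompose[OF e] index_decompose[OF e'] by (auto simp: x0_z0_x0'_z0'_def)
  let ?s = "complex_of_real (sqrt (P x0 z0))" and ?s' = "complex_of_real (sqrt (P x0' z0'))"
  have "ptrace_first p (p * p) (spectral_sum (p * (p * p)) {..<p} (\<lambda>_. complex_of_real (1 / real p)) (psi_slice p P)) $$ (e, e')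
      = (\<Sum>a<p. \<Sum>k<p. complex_of_real (1 / real p) * psi_slice p P k (a * (p * p) + e) * cnj (psi_slice p P k (a * (p * p) + e')))"
    using e e' by (simp add: ptrace_first_def index_spectral_sum index_less_mult)
  also have "\<dots> = (\<Sum>a<p. \<Sum>k<p. (complex_of_real (1 / real p) * ?s * cnj ?s') * (Wop p x0 z0 $$ (a, k) * cnj (Wop p x0' z0' $$ (a, k))))"
  proof (intro sum.cong refl)
    fix a k assume "a \<in> {..<p}"
    then have a: "a < p" by simp
    have ai: "(a * (p * p) + e) div (p * p) = a" "(a * (p * p) + e) mod (p * p) div p = x0" "(a * (p * p) + e) mod p = z0"
      "(a * (p * p) + e') div (p * p) = a" "(a * (p * p) + e') mod (p * p) div p = x0'" "(a * (p * p) + e') mod p = z0'"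
      using e e' by (simp_all add: x0_z0_x0'_z0'_def mod_mult2_eq' mod_mod_cancel mult_add_div_eq mult_square_add_mod_eq)
    show "complex_of_real (1 / real p) * psi_slice p P k (a * (p * p) + e) * cnj (psi_slice p P k (a * (p * p) + e'))
        = (complex_of_real (1 / real p) * ?s * cnj ?s') * (Wop p x0 z0 $$ (a, k) * cnj (Wop p x0' z0' $$ (a, k)))"
      unfolding psi_slice_def ai by (simp only: complex_cnj_mult mult_ac)
  qed
  also have "\<dots> = (complex_of_real (1 / real p) * ?s * cnj ?s') * (\<Sum>a<p. \<Sum>k<p. Wop p x0 z0 $$ (a, k) * cnj (Wop p x0' z0' $$ (a, k)))"
    by (simp add: sum_distrib_left)
  also have "\<dots> = (complex_of_real (1 / real p) * ?s * cnj ?s') * (if x0 = x0' \<and> z0 = z0' then of_nat p else 0)"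
    using xz by (simp add: Wop_hs_orthogonal)
  also have "\<dots> = (if e = e' then complex_of_real (P (e div p) (e mod p)) else 0)"
  proof (cases "x0 = x0' \<and> z0 = z0'")
    case True
    then have ee: "e = e'" using xz by simp
    have "?s * cnj ?s' = complex_of_real (P x0 z0)" using True P0 xz by (simp flip: of_real_mult)
    then show ?thesis using True ee p_pos by (simp add: x0_z0_x0'_z0'_def)
  next
    case False
    have "e \<noteq> e'"
    proof
      assume "e = e'"
      then have "x0 = x0' \<and> z0 = z0'" by (simp add: x0_z0_x0'_z0'_def)
      with False show False by simp
    qed
    then show ?thesis using False by auto
  qed
  also have "\<dots> = rdiag (p * p) (\<lambda>e. P (e div p) (e mod p)) $$ (e, e')"
    using e e' by (simp add: index_rdiag)
  finally show "ptrace_first p (p * p) (spectral_sum (p * (p * p)) {..<p} (\<lambda>_. complex_of_real (1 / real p)) (psi_slice p P)) $$ (e, e')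
      = rdiag (p * p) (\<lambda>e. P (e div p) (e mod p)) $$ (e, e')" .
qed (auto simp: ptrace_first_def)

end

section \<open>Entropies of the state\<close>

lemma vN_entropy_rdiag: "vN_entropy (rdiag n d) = (\<Sum>i<n. - (d i * log 2 (d i)))"
  unfolding rdiag_eq_spectral_sum by (rule vN_entropy_spectral_sum[OF _ orthonormal_family_std_basis]) simp

lemma sum_powr_pos:
  fixes f :: "'k \<Rightarrow> real"
  assumes "finite K" and "\<And>k. k \<in> K \<Longrightarrow> 0 \<le> f k" and "sum f K = 1"
  shows "0 < (\<Sum>k\<in>K. f k powr r)"
proof -
  have "(\<Sum>k\<in>K. f k powr r) \<noteq> 0"
  proof
    assume "(\<Sum>k\<in>K. f k powr r) = 0"
    then have "\<forall>k\<in>K. f k = 0" using assms(1) by (simp add: sum_nonneg_eq_0_iff)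
    then show False using assms(3) by simp
  qed
  moreover have "0 \<le> (\<Sum>k\<in>K. f k powr r)" by (simp add: sum_nonneg)
  ultimately show ?thesis by linarith
qed

lemma mat_fun_rdiag:
  assumes "f 0 = 0"
  shows "mat_fun f (rdiag n d) = rdiag n (\<lambda>i. f (d i))"
  unfolding rdiag_eq_spectral_sum by (rule mat_fun_spectral_sum) (simp_all add: orthonormal_family_std_basis assms)

lemma sand_div_eqI:
  assumes "mat_fun (\<lambda>x. x powr (- (s / (2 * (1 + s))))) \<sigma> = S"
    and "Re (mtrace (mat_fun (\<lambda>x. x powr (1 + s)) (S * \<rho> * S))) = Q"
    and "Q \<noteq> 0" and "0 < s \<Longrightarrow> supp_le \<rho> \<sigma>"
  shows "sand_div s \<rho> \<sigma> = ereal (1 / s * log 2 Q)"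
  using assms by (auto simp: sand_div_def Let_def)

lemma spectral_sum_normalize:
  assumes gram: "\<And>k k'. k \<in> K \<Longrightarrow> k' \<in> K \<Longrightarrow> (\<Sum>i<n. cnj (w k i) * w k' i) = complex_of_real Z * (if k = k' then 1 else 0)"
    and Z0: "0 < Z"
  shows "\<exists>u. orthonormal_family n K u \<and> spectral_sum n K (\<lambda>_. c) w = spectral_sum n K (\<lambda>_. complex_of_real Z * c) u"
proof -
  define u where "u k i = complex_of_real (1 / sqrt Z) * w k i" for k i
  have "w = (\<lambda>k i. complex_of_real (sqrt Z) * u k i)"
    using Z0 by (auto simp: u_def fun_eq_iff mult.assoc[symmetric] simp flip: of_real_mult)
  then have "spectral_sum n K (\<lambda>_. c) w = spectral_sum n K (\<lambda>_. complex_of_real Z * c) u"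
    using Z0 by (simp add: spectral_sum_scale_vectors)
  moreover have "orthonormal_family n K u"
    unfolding orthonormal_family_def
  proof (intro ballI)
    fix k k' assume kk: "k \<in> K" "k' \<in> K"
    have "(\<Sum>i<n. cnj (u k i) * u k' i) = complex_of_real (1 / Z) * (\<Sum>i<n. cnj (w k i) * w k' i)"
      using Z0 by (simp add: u_def sum_distrib_left mult_ac flip: of_real_mult)
    also have "\<dots> = (if k = k' then 1 else 0)" using gram[OF kk] Z0 by simp
    finally show "(\<Sum>i<n. cnj (u k i) * u k' i) = (if k = k' then 1 else 0)" .
  qed
  ultimately show ?thesis by blast
qed

lemma sum_product_case_prod: "(\<Sum>k\<in>A \<times> B. h (case_prod c k)) = (\<Sum>x\<in>A. \<Sum>y\<in>B. h (c x y))"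
  by (simp only: sum.cartesian_product split_def)

lemma prob_dist_sum_powr_pos:
  assumes "prob_dist p P"
  shows "0 < (\<Sum>x<p. \<Sum>z<p. P x z powr r)"
proof -
  have "0 < (\<Sum>k\<in>{..<p} \<times> {..<p}. case_prod P k powr r)"
    by (rule sum_powr_pos) (use assms in \<open>auto simp: prob_dist_def sum_product_case_prod[where h = "\<lambda>x. x"]\<close>)
  then show ?thesis by (simp add: sum_product_case_prod[where h = "\<lambda>x. x powr r"])
qed

context qudit
begin

lemma log_p_eq_uniform_entropy: "(\<Sum>k<p. - (1 / real p * log 2 (1 / real p))) = log 2 (real p)"
  using p_pos by (simp add: log_divide)

lemma conv_nonneg:
  assumes "prob_dist p P" "prob_dist p Pt"
  shows "0 \<le> conv p Pt P \<alpha> \<beta>"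
  using assms p_pos unfolding conv_def prob_dist_def by (intro sum_nonneg mult_nonneg_nonneg) auto

lemma cond_entropy_AB:
  assumes P: "prob_dist p P" and Pt: "prob_dist p Pt"
  shows "cond_entropy p p (ptrace_second (p * p) (p * p) (omega_ABE p P Pt))
       = shannon p (conv p Pt P) - log 2 (real p)"
proof -
  have P0: "\<forall>x<p. \<forall>z<p. 0 \<le> P x z" using P by (simp add: prob_dist_def)
  have "vN_entropy (ptrace_second (p * p) (p * p) (omega_ABE p P Pt))
      = (\<Sum>k\<in>{..<p} \<times> {..<p}. - (case_prod (conv p Pt P) k * log 2 (case_prod (conv p Pt P) k)))"
    unfolding omega_AB_eq[OF P0] by (rule vN_entropy_spectral_sum[OF _ orthonormal_family_bell_vec]) simp
  also have "\<dots> = shannon p (conv p Pt P)"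
    by (simp add: shannon_def sum_negf sum_product_case_prod[where h = "\<lambda>c. c * log 2 c"])
  finally have AB: "vN_entropy (ptrace_second (p * p) (p * p) (omega_ABE p P Pt)) = shannon p (conv p Pt P)" .
  have "ptrace_first p p (ptrace_second (p * p) (p * p) (omega_ABE p P Pt)) = rdiag p (\<lambda>_. 1 / real p)"
    unfolding omega_AB_eq[OF P0] by (rule omega_B_eq[OF P Pt])
  then have B: "vN_entropy (ptrace_first p p (ptrace_second (p * p) (p * p) (omega_ABE p P Pt))) = log 2 (real p)"
    by (simp only: vN_entropy_rdiag log_p_eq_uniform_entropy)
  show ?thesis using AB B by (simp add: cond_entropy_def)
qed

lemma cond_entropy_AE:
  assumes P: "prob_dist p P" and Pt: "prob_dist p Pt"
  shows "cond_entropy p (p * p) (ptrace_mid p p (p * p) (omega_ABE p P Pt)) = log 2 (real p) - shannon p P"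
proof -
  have P0: "\<forall>x<p. \<forall>z<p. 0 \<le> P x z" using P by (simp add: prob_dist_def)
  have "vN_entropy (ptrace_mid p p (p * p) (omega_ABE p P Pt)) = (\<Sum>k<p. - (1 / real p * log 2 (1 / real p)))"
    unfolding omega_AE_eq[OF P0 Pt] by (rule vN_entropy_spectral_sum[OF _ orthonormal_family_psi_slice[OF P]]) simp
  also have "\<dots> = log 2 (real p)" by (rule log_p_eq_uniform_entropy)
  finally have AE: "vN_entropy (ptrace_mid p p (p * p) (omega_ABE p P Pt)) = log 2 (real p)" .
  have "vN_entropy (ptrace_first p (p * p) (ptrace_mid p p (p * p) (omega_ABE p P Pt)))
      = (\<Sum>e<p * p. - (P (e div p) (e mod p) * log 2 (P (e div p) (e mod p))))"
    unfolding omega_AE_eq[OF P0 Pt] omega_E_eq[OF P0] by (rule vN_entropy_rdiag)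
  also have "\<dots> = shannon p P"
    by (simp add: sum_lessThan_mult shannon_def sum_negf)
  finally show ?thesis using AE by (simp add: cond_entropy_def)
qed

lemma supp_le_omega_AE:
  assumes P0: "\<forall>x<p. \<forall>z<p. 0 \<le> P x z"
  shows "supp_le (spectral_sum (p * (p * p)) {..<p} c (psi_slice p P))
           (rdiag (p * (p * p)) (\<lambda>i. P (i mod (p * p) div p) (i mod p)))"
  unfolding supp_le_def
proof (intro ballI impI)
  let ?N = "p * (p * p)"
  let ?D = "\<lambda>i. P (i mod (p * p) div p) (i mod p)"
  let ?M = "spectral_sum ?N {..<p} c (psi_slice p P)"
  fix v assume "v \<in> carrier_vec (dim_row (rdiag ?N ?D))" and z: "rdiag ?N ?D *\<^sub>v v = 0\<^sub>v (dim_row (rdiag ?N ?D))"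
  then have vc: "v \<in> carrier_vec ?N" by simp
  have "complex_of_real (?D j) * v $ j = 0" if j: "j < ?N" for j
    using z j by (metis index_rdiag_mult_vec[OF j vc] index_zero_vec(1) rdiag_dims(1))
  then have sv: "complex_of_real (sqrt (?D j)) * v $ j = 0" if "j < ?N" for j
    using that by auto
  show "?M *\<^sub>v v = 0\<^sub>v (dim_row ?M)"
  proof (rule eq_vecI)
    fix i assume "i < dim_vec (0\<^sub>v (dim_row ?M))"
    then have i: "i < ?N" by simp
    have "(?M *\<^sub>v v) $ i = (\<Sum>j<?N. \<Sum>k<p. c k * psi_slice p P k i * cnj (Wop p (j mod (p * p) div p) (j mod p) $$ (j div (p * p), k)) *
                       (complex_of_real (sqrt (?D j)) * v $ j))"
      using i vc by (subst mult_mat_vec_index_sum)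
        (auto simp: index_spectral_sum psi_slice_def sum_distrib_right sum_distrib_left mult_ac intro!: sum.cong)
    also have "\<dots> = 0" using sv by (intro sum.neutral ballI) simp
    finally show "(?M *\<^sub>v v) $ i = 0\<^sub>v (dim_row ?M) $ i" using i by simp
  qed simp
qed

lemma renyi_down_AB:
  assumes P: "prob_dist p P" and Pt: "prob_dist p Pt" and t: "0 < t" "t < 1"
  shows "cond_renyi_down (- t) p p (ptrace_second (p * p) (p * p) (omega_ABE p P Pt))
       = ereal (renyi p (1 - t) (conv p Pt P) - log 2 (real p))"
proof -
  have P0: "\<forall>x<p. \<forall>z<p. 0 \<le> P x z" using P by (simp add: prob_dist_def)
  define s where "s = - t"
  define a where "a = s / (2 * (1 + s))"
  define cv where "cv = case_prod (conv p Pt P)"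
  define K where "K = {..<p} \<times> {..<p}"
  define r where "r = (1 / real p) powr (- a)"
  define Z where "Z = (\<Sum>k\<in>K. cv k powr (1 + s))"
  have cv0: "0 \<le> cv k" for k using conv_nonneg[OF P Pt] by (simp add: cv_def split: prod.split)
  have on: "orthonormal_family (p * p) K (bell_vec p)" unfolding K_def by (rule orthonormal_family_bell_vec)
  have finK: "finite K" by (simp add: K_def)
  have AB: "ptrace_second (p * p) (p * p) (omega_ABE p P Pt) = spectral_sum (p * p) K (\<lambda>k. complex_of_real (cv k)) (bell_vec p)"
    unfolding K_def cv_def by (rule omega_AB_eq[OF P0])
  have "ptrace_first p p (ptrace_second (p * p) (p * p) (omega_ABE p P Pt)) = rdiag p (\<lambda>_. 1 / real p)"
    unfolding omega_AB_eq[OF P0] by (rule omega_B_eq[OF P Pt])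
  then have B: "kron (1\<^sub>m p) (ptrace_first p p (ptrace_second (p * p) (p * p) (omega_ABE p P Pt))) = rdiag (p * p) (\<lambda>_. 1 / real p)"
    using kron_one_rdiag[OF p_pos, of p] by simp
  have S: "mat_fun (\<lambda>x. x powr (- a)) (rdiag (p * p) (\<lambda>_. 1 / real p)) = rdiag (p * p) (\<lambda>_. r)"
    by (simp add: mat_fun_rdiag r_def)
  have SrS: "rdiag (p * p) (\<lambda>_. r) * spectral_sum (p * p) K (\<lambda>k. complex_of_real (cv k)) (bell_vec p) * rdiag (p * p) (\<lambda>_. r)
      = spectral_sum (p * p) K (\<lambda>k. complex_of_real (r * r * cv k)) (bell_vec p)"
    by (simp add: rdiag_sandwich_spectral_sum spectral_sum_scale_vectors mult.assoc)
  have r0: "0 < r" using p_pos by (simp add: r_def)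
  have rr: "(r * r) powr (1 + s) = real p powr s"
  proof -
    have "r = real p powr a" using p_pos by (simp add: r_def powr_minus_divide powr_divide)
    then have "(r * r) powr (1 + s) = real p powr (2 * a * (1 + s))"
      using p_pos by (simp add: powr_powr powr_add[symmetric] flip: powr_mult)
    also have "2 * a * (1 + s) = s" using t by (simp add: a_def s_def field_simps)
    finally show ?thesis .
  qed
  have "Re (mtrace (mat_fun (\<lambda>x. x powr (1 + s)) (spectral_sum (p * p) K (\<lambda>k. complex_of_real (r * r * cv k)) (bell_vec p))))
      = (\<Sum>k\<in>K. (r * r * cv k) powr (1 + s))"
    by (subst mat_fun_spectral_sum[OF finK on]) (auto simp: trace_spectral_sum[OF on] Re_sum)
  also have "\<dots> = (\<Sum>k\<in>K. (r * r) powr (1 + s) * cv k powr (1 + s))"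
    using r0 cv0 by (auto intro!: sum.cong powr_mult)
  also have "\<dots> = real p powr s * Z"
    by (simp only: rr Z_def sum_distrib_left)
  finally have Q: "Re (mtrace (mat_fun (\<lambda>x. x powr (1 + s)) (spectral_sum (p * p) K (\<lambda>k. complex_of_real (r * r * cv k)) (bell_vec p))))
      = real p powr s * Z" .
  have Z0: "0 < Z" unfolding Z_def
    by (rule sum_powr_pos) (use cv0 conv_sum[OF P Pt] in \<open>auto simp: K_def cv_def sum_product_case_prod[where h = "\<lambda>x. x"]\<close>)
  have "sand_div s (ptrace_second (p * p) (p * p) (omega_ABE p P Pt))
      (kron (1\<^sub>m p) (ptrace_first p p (ptrace_second (p * p) (p * p) (omega_ABE p P Pt))))
      = ereal (1 / s * log 2 (real p powr s * Z))"
  proof (rule sand_div_eqI)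
    show "mat_fun (\<lambda>x. x powr (- (s / (2 * (1 + s)))))
        (kron (1\<^sub>m p) (ptrace_first p p (ptrace_second (p * p) (p * p) (omega_ABE p P Pt)))) = rdiag (p * p) (\<lambda>_. r)"
      unfolding B a_def[symmetric] by (rule S)
    show "Re (mtrace (mat_fun (\<lambda>x. x powr (1 + s))
        (rdiag (p * p) (\<lambda>_. r) * ptrace_second (p * p) (p * p) (omega_ABE p P Pt) * rdiag (p * p) (\<lambda>_. r))))
        = real p powr s * Z"
      unfolding AB SrS by (rule Q)
    show "real p powr s * Z \<noteq> 0" using Z0 p_pos by simp
    show "0 < s \<Longrightarrow> supp_le (ptrace_second (p * p) (p * p) (omega_ABE p P Pt))
        (kron (1\<^sub>m p) (ptrace_first p p (ptrace_second (p * p) (p * p) (omega_ABE p P Pt))))"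
      using t by (simp add: s_def)
  qed
  also have "1 / s * log 2 (real p powr s * Z) = log 2 (real p) + (1 / s) * log 2 Z"
    using Z0 p_pos t by (simp add: log_mult log_powr s_def field_simps)
  also have "(1 / s) * log 2 Z = - renyi p (1 - t) (conv p Pt P)"
    by (simp add: renyi_def Z_def K_def cv_def s_def sum_product_case_prod[where h = "\<lambda>x. x powr (1 - t)"])
  finally show ?thesis unfolding cond_renyi_down_def s_def by simp
qed

text \<open>\<open>rdiag (p * (p * p)) D\<close> is \<open>I\<^sub>A \<otimes> \<omega>\<^sub>E\<close>: the bound on \<open>H\<^sup>\<up>\<close> uses the feasible choice
  \<open>\<sigma>\<^sub>E = \<omega>\<^sub>E\<close>, for which the sandwiched state is again a multiple of a projector.\<close>

lemma omega_AE_sandwich: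
  fixes a :: real
  assumes P: "prob_dist p P" and Pt: "prob_dist p Pt"
  defines "D \<equiv> \<lambda>i. P (i mod (p * p) div p) (i mod p)" and "Z \<equiv> (\<Sum>x<p. \<Sum>z<p. P x z powr (1 - 2 * a))"
  shows "\<exists>u. orthonormal_family (p * (p * p)) {..<p} u \<and>
    rdiag (p * (p * p)) (\<lambda>i. D i powr (- a)) * ptrace_mid p p (p * p) (omega_ABE p P Pt) * rdiag (p * (p * p)) (\<lambda>i. D i powr (- a))
      = spectral_sum (p * (p * p)) {..<p} (\<lambda>_. complex_of_real (Z / real p)) u"
proof -
  define w where "w k i = complex_of_real (D i powr (- a)) * psi_slice p P k i" for k i
  have P0: "\<forall>x<p. \<forall>z<p. 0 \<le> P x z" using P by (simp add: prob_dist_def)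
  have g: "y powr (- a) * y powr (- a) * y = y powr (1 - 2 * a)" if y: "0 \<le> y" for y
  proof (cases "y = 0")
    case False
    have "y powr (- a) * y powr (- a) * y = y powr (- a) * y powr (- a) * y powr 1" using y by simp
    also have "\<dots> = y powr (1 - 2 * a)" by (simp only: powr_add[symmetric]) simp
    finally show ?thesis .
  qed simp
  have Z0: "0 < Z" unfolding Z_def by (rule prob_dist_sum_powr_pos[OF P])
  have gram: "(\<Sum>i<p * (p * p). cnj (w k i) * w k' i) = complex_of_real Z * (if k = k' then 1 else 0)"
    if "k \<in> {..<p}" "k' \<in> {..<p}" for k k'
  proof -
    define h where "h y = y powr (- a) * y powr (- a)" for y
    have "(\<Sum>i<p * (p * p). cnj (w k i) * w k' i)
        = (\<Sum>i<p * (p * p). complex_of_real (h (D i)) * (cnj (psi_slice p P k i) * psi_slice p P k' i))"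
      by (intro sum.cong refl) (simp add: w_def h_def mult_ac)
    also have "\<dots> = complex_of_real (\<Sum>x<p. \<Sum>z<p. h (P x z) * P x z) * (if k = k' then 1 else 0)"
      unfolding D_def using that by (intro psi_slice_weighted_gram[OF P0]) auto
    also have "(\<Sum>x<p. \<Sum>z<p. h (P x z) * P x z) = Z"
      unfolding Z_def h_def using P0 g by (intro sum.cong refl) auto
    finally show ?thesis .
  qed
  have "rdiag (p * (p * p)) (\<lambda>i. D i powr (- a)) * ptrace_mid p p (p * p) (omega_ABE p P Pt) * rdiag (p * (p * p)) (\<lambda>i. D i powr (- a))
      = spectral_sum (p * (p * p)) {..<p} (\<lambda>_. complex_of_real (1 / real p)) w"
    unfolding omega_AE_eq[OF P0 Pt] w_def by (rule rdiag_sandwich_spectral_sum)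
  moreover obtain u where "orthonormal_family (p * (p * p)) {..<p} u"
    and "spectral_sum (p * (p * p)) {..<p} (\<lambda>_. complex_of_real (1 / real p)) w
      = spectral_sum (p * (p * p)) {..<p} (\<lambda>_. complex_of_real Z * complex_of_real (1 / real p)) u"
    using spectral_sum_normalize[OF gram Z0] by blast
  ultimately show ?thesis by (auto simp flip: of_real_mult)
qed

lemma density_op_omega_E:
  assumes P: "prob_dist p P"
  shows "density_op (p * p) (rdiag (p * p) (\<lambda>e. P (e div p) (e mod p)))"
proof (rule density_op_rdiag)
  show "0 \<le> P (i div p) (i mod p)" if "i < p * p" for i
    using P that p_pos by (simp add: less_mult_imp_div_less prob_dist_def)
  show "(\<Sum>i<p * p. P (i div p) (i mod p)) = 1"
    using P by (simp add: sum_lessThan_mult prob_dist_def)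
qed

lemma sand_div_omega_AE:
  assumes P: "prob_dist p P" and Pt: "prob_dist p Pt" and t: "0 < t" "t < 1"
  shows "sand_div t (ptrace_mid p p (p * p) (omega_ABE p P Pt)) (kron (1\<^sub>m p) (rdiag (p * p) (\<lambda>e. P (e div p) (e mod p))))
       = ereal (renyi p (1 / (1 + t)) P - log 2 (real p))"
proof -
  define N where "N = p * (p * p)"
  define D where "D = (\<lambda>i. P (i mod (p * p) div p) (i mod p))"
  define a where "a = t / (2 * (1 + t))"
  define Z where "Z = (\<Sum>x<p. \<Sum>z<p. P x z powr (1 / (1 + t)))"
  define \<sigma>E where "\<sigma>E = rdiag (p * p) (\<lambda>e. P (e div p) (e mod p))"
  have P0: "\<forall>x<p. \<forall>z<p. 0 \<le> P x z" using P by (simp add: prob_dist_def)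
  have "1 - 2 * a = 1 / (1 + t)"
  proof -
    have "2 * a = t / (1 + t)"
      unfolding a_def by (subst times_divide_eq_right, subst mult_divide_mult_cancel_left) simp_all
    moreover have "1 - t / (1 + t) = 1 / (1 + t)" using t by (simp add: field_simps)
    ultimately show ?thesis by simp
  qed
  then obtain u where u: "orthonormal_family N {..<p} u"
    and SrS: "rdiag N (\<lambda>i. D i powr (- a)) * ptrace_mid p p (p * p) (omega_ABE p P Pt) * rdiag N (\<lambda>i. D i powr (- a))
      = spectral_sum N {..<p} (\<lambda>_. complex_of_real (Z / real p)) u"
    using omega_AE_sandwich[OF P Pt, of a] unfolding N_def D_def Z_def by auto
  have Z0: "0 < Z" unfolding Z_def by (rule prob_dist_sum_powr_pos[OF P])
  have k\<sigma>: "kron (1\<^sub>m p) \<sigma>E = rdiag N D"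
    using kron_one_rdiag[of "p * p" p "\<lambda>e. P (e div p) (e mod p)"] p_pos
    by (simp add: \<sigma>E_def N_def D_def mod_mod_cancel)
  have "mat_fun (\<lambda>x. x powr (1 + t)) (spectral_sum N {..<p} (\<lambda>_. complex_of_real (Z / real p)) u)
      = spectral_sum N {..<p} (\<lambda>_. complex_of_real ((Z / real p) powr (1 + t))) u"
    by (rule mat_fun_spectral_sum[OF _ u]) simp_all
  then have Q: "Re (mtrace (mat_fun (\<lambda>x. x powr (1 + t)) (spectral_sum N {..<p} (\<lambda>_. complex_of_real (Z / real p)) u)))
      = real p * (Z / real p) powr (1 + t)"
    by (simp add: trace_spectral_sum[OF u])
  have "sand_div t (ptrace_mid p p (p * p) (omega_ABE p P Pt)) (kron (1\<^sub>m p) \<sigma>E)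
      = ereal (1 / t * log 2 (real p * (Z / real p) powr (1 + t)))"
  proof (rule sand_div_eqI)
    show "mat_fun (\<lambda>x. x powr (- (t / (2 * (1 + t))))) (kron (1\<^sub>m p) \<sigma>E) = rdiag N (\<lambda>i. D i powr (- a))"
      unfolding k\<sigma> a_def[symmetric] by (simp add: mat_fun_rdiag)
    show "Re (mtrace (mat_fun (\<lambda>x. x powr (1 + t))
        (rdiag N (\<lambda>i. D i powr (- a)) * ptrace_mid p p (p * p) (omega_ABE p P Pt) * rdiag N (\<lambda>i. D i powr (- a)))))
        = real p * (Z / real p) powr (1 + t)"
      unfolding SrS by (rule Q)
    show "real p * (Z / real p) powr (1 + t) \<noteq> 0" using Z0 p_pos by simp
    show "0 < t \<Longrightarrow> supp_le (ptrace_mid p p (p * p) (omega_ABE p P Pt)) (kron (1\<^sub>m p) \<sigma>E)"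
      unfolding omega_AE_eq[OF P0 Pt] k\<sigma> N_def D_def by (rule supp_le_omega_AE[OF P0])
  qed
  also have "1 / t * log 2 (real p * (Z / real p) powr (1 + t)) = renyi p (1 / (1 + t)) P - log 2 (real p)"
  proof -
    have "1 / (1 + t) - 1 = - t / (1 + t)" using t by (simp add: field_simps)
    then have "renyi p (1 / (1 + t)) P = ((1 + t) / t) * log 2 Z"
      using t by (simp add: renyi_def Z_def field_simps)
    then show ?thesis
      using Z0 p_pos t by (simp add: log_mult log_powr log_divide field_simps)
  qed
  finally show ?thesis unfolding \<sigma>E_def .
qed

lemma renyi_up_AE:
  assumes P: "prob_dist p P" and Pt: "prob_dist p Pt" and t: "0 < t" "t < 1"
  shows "ereal (log 2 (real p) - renyi p (1 / (1 + t)) P)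
       \<le> cond_renyi_up t p (p * p) (ptrace_mid p p (p * p) (omega_ABE p P Pt))"
proof -
  let ?\<omega> = "ptrace_mid p p (p * p) (omega_ABE p P Pt)"
  let ?\<sigma>E = "rdiag (p * p) (\<lambda>e. P (e div p) (e mod p))"
  have "(INF \<sigma>\<in>{\<sigma>. density_op (p * p) \<sigma>}. sand_div t ?\<omega> (kron (1\<^sub>m p) \<sigma>)) \<le> sand_div t ?\<omega> (kron (1\<^sub>m p) ?\<sigma>E)"
    by (rule INF_lower) (use density_op_omega_E[OF P] in simp)
  then have "- sand_div t ?\<omega> (kron (1\<^sub>m p) ?\<sigma>E) \<le> cond_renyi_up t p (p * p) ?\<omega>"
    unfolding cond_renyi_up_def by (simp only: ereal_minus_le_minus)
  then show ?thesis unfolding sand_div_omega_AE[OF P Pt t] by simp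
qed

end

theorem lemma1:
  fixes p :: nat and P Pt :: "nat \<Rightarrow> nat \<Rightarrow> real"
  assumes "prime p"
    and "prob_dist p P" and "prob_dist p Pt"
  defines "\<omega> \<equiv> omega_ABE p P Pt"
  defines "\<omega>AB \<equiv> ptrace_second (p * p) (p * p) \<omega>"
  defines "\<omega>AE \<equiv> ptrace_mid p p (p * p) \<omega>"
  shows "cond_entropy p p \<omega>AB = shannon p (conv p Pt P) - log 2 (real p) \<and>
         cond_entropy p (p * p) \<omega>AE = log 2 (real p) - shannon p P \<and>
         (\<forall>t. 0 < t \<and> t < 1 \<longrightarrow>
           cond_renyi_down (- t) p p \<omega>AB = ereal (renyi p (1 - t) (conv p Pt P) - log 2 (real p))) \<and>
         (\<forall>t. 0 < t \<and> t < 1 \<longrightarrow>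
           cond_renyi_up t p (p * p) \<omega>AE \<ge> ereal (log 2 (real p) - renyi p (1 / (1 + t)) P))"
proof -
  interpret qudit p
    using prime_gt_1_nat[OF assms(1)] by unfold_locales
  show ?thesis
    unfolding \<omega>AB_def \<omega>AE_def \<omega>_def
    using cond_entropy_AB cond_entropy_AE renyi_down_AB renyi_up_AE assms(2,3) by blast
qed

end
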